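(* Assume $\eta_a\neq q^{j}\eta_b$ for all $j\in\{-1,0,1\}$ and $1\le a<b\le\mathsf N$. For $\mathbf h,\mathbf h'\in\{0,1\}^{\mathsf N}$ the pairing of the left SOV covector $\langle\mathbf h|$ with the right SOV vector $|\mathbf h'\rangle$ satisfies $\langle\mathbf h|\mathbf h'\rangle=0$ if $\mathbf h\neq\mathbf h'$, and $\langle h_1,\dots,h_{\mathsf N}|h_1,\dots,h_{\mathsf N}\rangle=\prod_{1\le b<a\le\mathsf N}\frac{1}{\eta_aq^{h_b-h_a}/\eta_b-\eta_b/(q^{h_b-h_a}\eta_a)}$. Equivalently, with the change-of-basis matrices $U^{(L)},U^{(R)}$ defined by $\langle\mathbf y_j|=\sum_iU^{(L)}_{j,i}\langle\mathbf x_i|$ and $|\mathbf y_j\rangle=\sum_iU^{(R)}_{i,j}|\mathbf x_i\rangle$, the matrix $U^{(L)}U^{(R)}$ is diagonal with these diagonal entries.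
   Context: Fix $q=e^{\eta}\in\mathbb C$, $q\neq\pm1$, $\mathsf N\ge1$, inhomogeneities $\eta_1,\dots,\eta_{\mathsf N}\in\mathbb C\setminus\{0\}$. $\mathcal R_{\mathsf N}=\bigotimes_{n=1}^{\mathsf N}\mathbb C^2$, $\mathcal L_{\mathsf N}$ its dual; $\langle\cdot|\cdot\rangle$ is the canonical pairing, with $|1,n\rangle,|-1,n\rangle$ the $\sigma^z_n$-eigenbasis and $\langle k,n|k',n\rangle=\delta_{k,k'}$; $\sigma^+=E_{12}$, $\sigma^-=E_{21}$. Lax operator $\mathsf L_{0n}(\lambda)=\begin{pmatrix}x_+(\lambda)+x_-(\lambda)\sigma^z_n & (q-q^{-1})\sigma^-_n\\ (q-q^{-1})\sigma^+_n & x_+(\lambda)-x_-(\lambda)\sigma^z_n\end{pmatrix}$, $x_\pm(\lambda)=\tfrac12(\lambda q-(q\lambda)^{-1}\pm(\lambda-\lambda^{-1}))$; monodromy $\mathsf M_0(\lambda)=\mathsf L_{0\mathsf N}(\lambda/\eta_{\mathsf N})\cdots\mathsf L_{01}(\lambda/\eta_1)=\begin{pmatrix}\mathsf A&\mathsf B\\ \mathsf C&\mathsf D\end{pmatrix}(\lambda)$. $a(\lambda)=-\prod_n(\lambda q/\eta_n-\eta_n/(\lambda q))$, $d(\lambda)=\prod_n(\lambda/\eta_n-\eta_n/\lambda)$. $\langle0|=\bigotimes_n\langle1,n|$, $|0\rangle=\bigotimes_n|1,n\rangle$, $\textsc{n}=\prod_{1\le b<a\le\mathsf N}(\eta_a/\eta_b-\eta_b/\eta_a)^{1/2}$.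 SOV states: $\langle\mathbf h|=\frac1{\textsc n}\langle0|\prod_n(\mathsf C(\eta_n)/d(\eta_n/q))^{h_n}$, $|\mathbf h\rangle=\frac1{\textsc n}\prod_n(\mathsf B(\eta_n)/a(\eta_n))^{h_n}|0\rangle$ for $\mathbf h\in\{0,1\}^{\mathsf N}$. Indexing: $j=\varkappa(\mathbf h)=1+\sum_a2^{a-1}h_a$, $\langle\mathbf y_j|=\langle\mathbf h|$, $|\mathbf y_j\rangle=|\mathbf h\rangle$, $\langle\mathbf x_j|=\bigotimes_n\langle2h_n-1,n|$, $|\mathbf x_j\rangle=\bigotimes_n|2h_n-1,n\rangle$. *)

theory Defs
  imports "HOL-Analysis.Analysis"
begin

text \<open>Quantum space R_N = tensor product of N copies of C^2.  A basis vector
  (sigma^z eigenbasis) is a configuration: a bool list of length N, where entry n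
  is True for |1,n> (spin up, h_n = 1) and False for |-1,n> (h_n = 0).
  Sites are indexed 0..N-1 (paper: 1..N).  Vectors and covectors are coordinate
  functions on configurations; operators are given by their matrix elements
  op x y = <x| op |y>.\<close>

type_synonym qop = "bool list \<Rightarrow> bool list \<Rightarrow> complex"
type_synonym qvec = "bool list \<Rightarrow> complex"

definition confs :: "nat \<Rightarrow> bool list set" where
  "confs N = {x. length x = N}"

definition op_mult :: "nat \<Rightarrow> qop \<Rightarrow> qop \<Rightarrow> qop" where
  "op_mult N A B = (\<lambda>x y. \<Sum>z\<in>confs N. A x z * B z y)"

definition op_add :: "qop \<Rightarrow> qop \<Rightarrow> qop" where
  "op_add A B = (\<lambda>x y. A x y + B x y)"

definition op_zero :: qop where
  "op_zero = (\<lambda>x y. 0)"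

definition op_id :: qop where
  "op_id = (\<lambda>x y. if x = y then 1 else 0)"

definition local_op :: "nat \<Rightarrow> nat \<Rightarrow> (bool \<Rightarrow> bool \<Rightarrow> complex) \<Rightarrow> qop" where
  "local_op N n m = (\<lambda>x y. if (\<forall>k<N. k \<noteq> n \<longrightarrow> x ! k = y ! k) then m (x ! n) (y ! n) else 0)"

definition loc_id :: "bool \<Rightarrow> bool \<Rightarrow> complex" where
  "loc_id a b = (if a = b then 1 else 0)"

definition sigma_z :: "bool \<Rightarrow> bool \<Rightarrow> complex" where
  "sigma_z a b = (if a = b then (if a then 1 else -1) else 0)"

text \<open>sigma^+ = E_12 : <1|sigma^+|-1> = 1;  sigma^- = E_21 : <-1|sigma^-|1> = 1.\<close>
definition sigma_plus :: "bool \<Rightarrow> bool \<Rightarrow> complex" where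
  "sigma_plus a b = (if a \<and> \<not> b then 1 else 0)"

definition sigma_minus :: "bool \<Rightarrow> bool \<Rightarrow> complex" where
  "sigma_minus a b = (if \<not> a \<and> b then 1 else 0)"

definition x_plus :: "complex \<Rightarrow> complex \<Rightarrow> complex" where
  "x_plus q l = (l * q - 1 / (q * l) + (l - 1 / l)) / 2"

definition x_minus :: "complex \<Rightarrow> complex \<Rightarrow> complex" where
  "x_minus q l = (l * q - 1 / (q * l) - (l - 1 / l)) / 2"

text \<open>2x2 matrices (auxiliary space, indices 0,1) with operator entries.\<close>
type_synonym auxmat = "nat \<Rightarrow> nat \<Rightarrow> qop"

definition aux_mult :: "nat \<Rightarrow> auxmat \<Rightarrow> auxmat \<Rightarrow> auxmat" where
  "aux_mult N M1 M2 = (\<lambda>i j. op_add (op_mult N (M1 i 0) (M2 0 j)) (op_mult N (M1 i 1) (M2 1 j)))"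

definition aux_id :: auxmat where
  "aux_id = (\<lambda>i j. if i = j then op_id else op_zero)"

definition lax :: "complex \<Rightarrow> nat \<Rightarrow> nat \<Rightarrow> complex \<Rightarrow> auxmat" where
  "lax q N n l = (\<lambda>i j.
     if i = 0 \<and> j = 0 then local_op N n (\<lambda>a b. x_plus q l * loc_id a b + x_minus q l * sigma_z a b)
     else if i = 0 \<and> j = 1 then local_op N n (\<lambda>a b. (q - 1 / q) * sigma_minus a b)
     else if i = 1 \<and> j = 0 then local_op N n (\<lambda>a b. (q - 1 / q) * sigma_plus a b)
     else local_op N n (\<lambda>a b. x_plus q l * loc_id a b - x_minus q l * sigma_z a b))"

text \<open>mono_aux n = L_{0n}(l/eta_n) ... L_{01}(l/eta_1) (0-based sites n-1,...,0).\<close>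
fun mono_aux :: "complex \<Rightarrow> (nat \<Rightarrow> complex) \<Rightarrow> nat \<Rightarrow> complex \<Rightarrow> nat \<Rightarrow> auxmat" where
  "mono_aux q eta N l 0 = aux_id"
| "mono_aux q eta N l (Suc n) = aux_mult N (lax q N n (l / eta n)) (mono_aux q eta N l n)"

definition monodromy :: "complex \<Rightarrow> (nat \<Rightarrow> complex) \<Rightarrow> nat \<Rightarrow> complex \<Rightarrow> auxmat" where
  "monodromy q eta N l = mono_aux q eta N l N"

definition opB :: "complex \<Rightarrow> (nat \<Rightarrow> complex) \<Rightarrow> nat \<Rightarrow> complex \<Rightarrow> qop" where
  "opB q eta N l = monodromy q eta N l 0 1"

definition opC :: "complex \<Rightarrow> (nat \<Rightarrow> complex) \<Rightarrow> nat \<Rightarrow> complex \<Rightarrow> qop" where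
  "opC q eta N l = monodromy q eta N l 1 0"

definition a_fun :: "complex \<Rightarrow> (nat \<Rightarrow> complex) \<Rightarrow> nat \<Rightarrow> complex \<Rightarrow> complex" where
  "a_fun q eta N l = - (\<Prod>n<N. l * q / eta n - eta n / (l * q))"

definition d_fun :: "(nat \<Rightarrow> complex) \<Rightarrow> nat \<Rightarrow> complex \<Rightarrow> complex" where
  "d_fun eta N l = (\<Prod>n<N. l / eta n - eta n / l)"

definition norm_sov :: "(nat \<Rightarrow> complex) \<Rightarrow> nat \<Rightarrow> complex" where
  "norm_sov eta N = (\<Prod>b<N. \<Prod>a\<in>{b<..<N}. csqrt (eta a / eta b - eta b / eta a))"

definition ref_state :: "nat \<Rightarrow> qvec" where
  "ref_state N = (\<lambda>x. if x = replicate N True then 1 else 0)"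

definition covec_op :: "nat \<Rightarrow> qvec \<Rightarrow> qop \<Rightarrow> qvec" where
  "covec_op N v A = (\<lambda>y. \<Sum>x\<in>confs N. v x * A x y)"

definition op_vec :: "nat \<Rightarrow> qop \<Rightarrow> qvec \<Rightarrow> qvec" where
  "op_vec N A w = (\<lambda>x. \<Sum>y\<in>confs N. A x y * w y)"

definition pairing :: "nat \<Rightarrow> qvec \<Rightarrow> qvec \<Rightarrow> complex" where
  "pairing N v w = (\<Sum>x\<in>confs N. v x * w x)"

text \<open>Left SOV covector <h| = (1/n) <0| prod_n (C(eta_n)/d(eta_n/q))^{h_n},
  the product taken in the order n = 1, ..., N from left to right.\<close>
definition left_sov :: "complex \<Rightarrow> (nat \<Rightarrow> complex) \<Rightarrow> nat \<Rightarrow> bool list \<Rightarrow> qvec" where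
  "left_sov q eta N h =
     fold (\<lambda>n v. if h ! n then (\<lambda>y. covec_op N v (opC q eta N (eta n)) y / d_fun eta N (eta n / q)) else v)
       [0..<N] (\<lambda>x. ref_state N x / norm_sov eta N)"

text \<open>Right SOV vector |h> = (1/n) prod_n (B(eta_n)/a(eta_n))^{h_n} |0>,
  the product taken in the order n = 1, ..., N from left to right.\<close>
definition right_sov :: "complex \<Rightarrow> (nat \<Rightarrow> complex) \<Rightarrow> nat \<Rightarrow> bool list \<Rightarrow> qvec" where
  "right_sov q eta N h =
     foldr (\<lambda>n w. if h ! n then (\<lambda>x. op_vec N (opB q eta N (eta n)) w x / a_fun q eta N (eta n)) else w)
       [0..<N] (\<lambda>x. ref_state N x / norm_sov eta N)"

end

theory Submission
  imports Defs
begin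

text \<open>Both kinds of SOV states are eigenstates of \<open>D(\<lambda>)\<close>, with eigenvalue
  \<open>\<Prod>\<^sub>n (\<lambda> q\<^bsup>h\<^sub>n\<^esup>/\<eta>\<^sub>n - \<eta>\<^sub>n/(\<lambda> q\<^bsup>h\<^sub>n\<^esup>))\<close>: this follows from the RTT relation, proved site by
  site from the Yang-Baxter equation of the Lax matrix, together with the action of the monodromy
  matrix on the reference state. Evaluating at \<open>\<lambda> = \<eta>\<^sub>m / q\<close> separates any two different
  \<open>h\<close>, which gives orthogonality. For the diagonal pairings, the exchange relation of
  \<open>D(\<eta>\<^sub>m)\<close> and \<open>B(\<eta>\<^sub>m / q)\<close> between \<open>\<langle>h|\<close> and \<open>|h[m := 0]\<rangle>\<close>, combined with the quantum
  determinant, relates \<open>\<langle>h|h\<rangle>\<close> to \<open>\<langle>h[m := 0]|h[m := 0]\<rangle>\<close>; the claimed product satisfies the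
  same recursion. Identities obtained for generic \<open>\<lambda>\<close> are extended to the remaining points by
  continuity.\<close>

lemma finite_confs [simp]: "finite (confs N)"
proof -
  have "confs N = {xs. set xs \<subseteq> UNIV \<and> length xs = N}" by (auto simp: confs_def)
  then show ?thesis using finite_lists_length_eq[of "UNIV::bool set" N] by simp
qed

lemma confs_0: "confs 0 = {[]}"
  by (auto simp: confs_def)

lemma confs_Suc: "confs (Suc N) = (\<lambda>p. fst p @ [snd p]) ` (confs N \<times> UNIV)"
proof
  show "confs (Suc N) \<subseteq> (\<lambda>p. fst p @ [snd p]) ` (confs N \<times> UNIV)"
  proof
    fix z assume "z \<in> confs (Suc N)"
    then have "length z = Suc N" by (simp add: confs_def)
    then obtain x s where "z = x @ [s]" "length x = N"
      by (metis length_Suc_conv_rev)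
    then show "z \<in> (\<lambda>p. fst p @ [snd p]) ` (confs N \<times> UNIV)"
      by (auto simp: confs_def image_iff)
  qed
qed (auto simp: confs_def)

lemma confs_SucE:
  assumes "z \<in> confs (Suc N)"
  obtains x s where "z = x @ [s]" "x \<in> confs N"
  using assms unfolding confs_Suc by auto

lemma sum_confs_Suc:
  "(\<Sum>z\<in>confs (Suc N). f z) = (\<Sum>z\<in>confs N. f (z @ [True]) + f (z @ [False]))"
proof -
  have inj: "inj_on (\<lambda>p. fst p @ [snd p]) (confs N \<times> (UNIV::bool set))"
    by (auto simp: inj_on_def)
  have "(\<Sum>z\<in>confs (Suc N). f z) = (\<Sum>p\<in>confs N \<times> UNIV. f (fst p @ [snd p]))"
    unfolding confs_Suc by (rule sum.reindex_cong[OF inj refl]) simp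
  also have "\<dots> = (\<Sum>z\<in>confs N. \<Sum>s\<in>UNIV. f (z @ [s]))"
    by (simp add: sum.cartesian_product split_beta)
  finally show ?thesis
    by (simp add: UNIV_bool add.commute)
qed

lemma sum_lessThan_2: "(\<Sum>i<(2::nat). f i) = f 0 + f (Suc 0)"
  by (simp add: numeral_2_eq_2)

lemma sum_UNIV_bool: "(\<Sum>r\<in>(UNIV::bool set). f r) = f True + f False"
  by (simp add: UNIV_bool add.commute)

lemma op_mult_cong:
  assumes "\<And>z. z \<in> confs N \<Longrightarrow> X x z = X' x z" "\<And>z. z \<in> confs N \<Longrightarrow> Y z y = Y' z y"
  shows "op_mult N X Y x y = op_mult N X' Y' x y"
  unfolding op_mult_def using assms by (intro sum.cong) auto

lemma op_vec_cong:
  "(\<And>y. y \<in> confs N \<Longrightarrow> w y = w' y) \<Longrightarrow> op_vec N X w x = op_vec N X w' x"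
  unfolding op_vec_def by (rule sum.cong) auto

lemma covec_op_cong:
  assumes "\<And>x. x \<in> confs N \<Longrightarrow> v x = v' x" "\<And>x. x \<in> confs N \<Longrightarrow> X x y = X' x y"
  shows "covec_op N v X y = covec_op N v' X' y"
  unfolding covec_op_def using assms by (intro sum.cong) auto

lemma pairing_cong:
  assumes "\<And>x. x \<in> confs N \<Longrightarrow> v x = v' x" "\<And>x. x \<in> confs N \<Longrightarrow> w x = w' x"
  shows "pairing N v w = pairing N v' w'"
  unfolding pairing_def using assms by (intro sum.cong) auto

lemma op_vec_mult: "op_vec N (op_mult N X Y) w x = op_vec N X (op_vec N Y w) x"
proof -
  have "op_vec N (op_mult N X Y) w x = (\<Sum>y\<in>confs N. \<Sum>z\<in>confs N. X x z * Y z y * w y)"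
    by (simp add: op_vec_def op_mult_def sum_distrib_right)
  also have "\<dots> = (\<Sum>z\<in>confs N. \<Sum>y\<in>confs N. X x z * Y z y * w y)"
    by (rule sum.swap)
  finally show ?thesis
    by (simp add: op_vec_def sum_distrib_left mult.assoc)
qed

lemma covec_op_mult: "covec_op N v (op_mult N X Y) y = covec_op N (covec_op N v X) Y y"
proof -
  have "covec_op N v (op_mult N X Y) y = (\<Sum>x\<in>confs N. \<Sum>z\<in>confs N. v x * X x z * Y z y)"
    by (simp add: covec_op_def op_mult_def sum_distrib_left mult.assoc)
  also have "\<dots> = (\<Sum>z\<in>confs N. \<Sum>x\<in>confs N. v x * X x z * Y z y)"
    by (rule sum.swap)
  finally show ?thesis
    by (simp add: covec_op_def sum_distrib_right)
qed

lemma pairing_covec_op: "pairing N (covec_op N v X) w = pairing N v (op_vec N X w)"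
proof -
  have "pairing N (covec_op N v X) w = (\<Sum>y\<in>confs N. \<Sum>x\<in>confs N. v x * X x y * w y)"
    by (simp add: pairing_def covec_op_def sum_distrib_right)
  also have "\<dots> = (\<Sum>x\<in>confs N. \<Sum>y\<in>confs N. v x * X x y * w y)"
    by (rule sum.swap)
  finally show ?thesis
    by (simp add: pairing_def op_vec_def sum_distrib_left mult.assoc)
qed

lemma op_vec_scale: "op_vec N X (\<lambda>x. c * w x) x = c * op_vec N X w x"
  by (simp add: op_vec_def sum_distrib_left ac_simps)

lemma covec_op_scale: "covec_op N (\<lambda>x. c * v x) X = (\<lambda>y. c * covec_op N v X y)"
  by (simp add: covec_op_def sum_distrib_left ac_simps)

lemma op_vec_divide: "op_vec N X (\<lambda>x. w x / c) x = op_vec N X w x / c"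
  by (simp add: op_vec_def sum_divide_distrib)

lemma covec_op_divide: "covec_op N (\<lambda>x. v x / c) X y = covec_op N v X y / c"
  by (simp add: covec_op_def sum_divide_distrib)

lemma pairing_scale_left: "pairing N (\<lambda>x. c * v x) w = c * pairing N v w"
  by (simp add: pairing_def sum_distrib_left ac_simps)

lemma pairing_scale_right: "pairing N v (\<lambda>x. c * w x) = c * pairing N v w"
  by (simp add: pairing_def sum_distrib_left ac_simps)

lemma op_vec_linear_relation:
  assumes "\<And>y. y \<in> confs N \<Longrightarrow> a * M1 x y + b * M2 x y = c * M3 x y"
  shows "a * op_vec N M1 w x + b * op_vec N M2 w x = c * op_vec N M3 w x"
proof -
  have "a * op_vec N M1 w x + b * op_vec N M2 w x = (\<Sum>y\<in>confs N. (a * M1 x y + b * M2 x y) * w y)"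
    by (simp add: op_vec_def sum_distrib_left sum.distrib algebra_simps)
  also have "\<dots> = (\<Sum>y\<in>confs N. c * M3 x y * w y)"
    using assms by (intro sum.cong) auto
  finally show ?thesis
    by (simp add: op_vec_def sum_distrib_left algebra_simps)
qed

lemma covec_op_linear_relation:
  assumes "\<And>x. x \<in> confs N \<Longrightarrow> a * M1 x y = b * M2 x y + c * M3 x y"
  shows "a * covec_op N v M1 y = b * covec_op N v M2 y + c * covec_op N v M3 y"
proof -
  have "a * covec_op N v M1 y = (\<Sum>x\<in>confs N. v x * (a * M1 x y))"
    by (simp add: covec_op_def sum_distrib_left algebra_simps)
  also have "\<dots> = (\<Sum>x\<in>confs N. v x * (b * M2 x y + c * M3 x y))"
    using assms by (intro sum.cong) auto
  finally show ?thesis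
    by (simp add: covec_op_def sum_distrib_left sum.distrib algebra_simps)
qed

lemma op_mult_sum2:
  "op_mult N (\<lambda>u v. \<Sum>a<2. f a * X a u v) (\<lambda>u v. \<Sum>b<2. g b * Y b u v) x y =
   (\<Sum>a<(2::nat). \<Sum>b<(2::nat). f a * g b * op_mult N (X a) (Y b) x y)"
proof -
  have "op_mult N (\<lambda>u v. \<Sum>a<2. f a * X a u v) (\<lambda>u v. \<Sum>b<2. g b * Y b u v) x y
     = (\<Sum>z\<in>confs N. \<Sum>a<(2::nat). \<Sum>b<(2::nat). f a * g b * (X a x z * Y b z y))"
    unfolding op_mult_def sum_product by (simp add: ac_simps)
  also have "\<dots> = (\<Sum>a<(2::nat). \<Sum>z\<in>confs N. \<Sum>b<(2::nat). f a * g b * (X a x z * Y b z y))"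
    by (rule sum.swap)
  also have "\<dots> = (\<Sum>a<(2::nat). \<Sum>b<(2::nat). \<Sum>z\<in>confs N. f a * g b * (X a x z * Y b z y))"
    by (rule sum.cong[OF refl], rule sum.swap)
  finally show ?thesis
    by (simp add: op_mult_def sum_distrib_left)
qed


abbreviation opA :: "complex \<Rightarrow> (nat \<Rightarrow> complex) \<Rightarrow> nat \<Rightarrow> complex \<Rightarrow> qop" where
  "opA q eta N l \<equiv> monodromy q eta N l 0 0"

abbreviation opD :: "complex \<Rightarrow> (nat \<Rightarrow> complex) \<Rightarrow> nat \<Rightarrow> complex \<Rightarrow> qop" where
  "opD q eta N l \<equiv> monodromy q eta N l (Suc 0) (Suc 0)"

lemma opB_eq: "opB q eta N l = monodromy q eta N l 0 (Suc 0)"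
  by (simp add: opB_def)

lemma opC_eq: "opC q eta N l = monodromy q eta N l (Suc 0) 0"
  by (simp add: opC_def)

definition bracket :: "complex \<Rightarrow> complex" where
  "bracket z = z - 1 / z"

lemma bracket_1 [simp]: "bracket 1 = 0"
  by (simp add: bracket_def)

lemma bracket_inverse: "bracket (1 / z) = - bracket z"
  by (simp add: bracket_def)

lemma bracket_eq_0_iff: "z \<noteq> 0 \<Longrightarrow> bracket z = 0 \<longleftrightarrow> z = 1 \<or> z = -1"
proof -
  assume "z \<noteq> 0"
  then have "bracket z = 0 \<longleftrightarrow> (z - 1) * (z + 1) = 0"
    by (simp add: bracket_def field_simps algebra_simps)
  then show ?thesis by (auto simp: add_eq_0_iff2)
qed

lemma a_fun_Suc: "a_fun q eta (Suc N) l = a_fun q eta N l * bracket (l / eta N * q)"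
  by (simp add: a_fun_def bracket_def field_simps)

lemma d_fun_Suc: "d_fun eta (Suc N) l = d_fun eta N l * bracket (l / eta N)"
  by (simp add: d_fun_def bracket_def field_simps)

definition lax_entry :: "complex \<Rightarrow> complex \<Rightarrow> nat \<Rightarrow> nat \<Rightarrow> bool \<Rightarrow> bool \<Rightarrow> complex" where
  "lax_entry q l i j =
    (if i = 0 \<and> j = 0 then (\<lambda>a b. x_plus q l * loc_id a b + x_minus q l * sigma_z a b)
     else if i = 0 \<and> j = 1 then (\<lambda>a b. (q - 1 / q) * sigma_minus a b)
     else if i = 1 \<and> j = 0 then (\<lambda>a b. (q - 1 / q) * sigma_plus a b)
     else (\<lambda>a b. x_plus q l * loc_id a b - x_minus q l * sigma_z a b))"

lemma lax_entry_simps: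
  "lax_entry q l 0 0 s t = (if s = t then if s then bracket (l * q) else bracket l else 0)"
  "lax_entry q l (Suc 0) (Suc 0) s t = (if s = t then if s then bracket l else bracket (l * q) else 0)"
  "lax_entry q l 0 (Suc 0) s t = (if \<not> s \<and> t then q - 1 / q else 0)"
  "lax_entry q l (Suc 0) 0 s t = (if s \<and> \<not> t then q - 1 / q else 0)"
  by (auto simp: lax_entry_def x_plus_def x_minus_def bracket_def loc_id_def sigma_z_def
      sigma_plus_def sigma_minus_def field_simps)

lemma local_op_snoc:
  assumes "n < N" "x \<in> confs N" "y \<in> confs N"
  shows "local_op (Suc N) n m (x @ [s]) (y @ [t]) = (if s = t then local_op N n m x y else 0)"
proof -
  have len: "length x = N" "length y = N" using assms by (auto simp: confs_def)
  have "(\<forall>k<Suc N. k \<noteq> n \<longrightarrow> (x @ [s]) ! k = (y @ [t]) ! k) \<longleftrightarrow>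
      (\<forall>k<N. k \<noteq> n \<longrightarrow> x ! k = y ! k) \<and> s = t"
  proof
    assume H: "\<forall>k<Suc N. k \<noteq> n \<longrightarrow> (x @ [s]) ! k = (y @ [t]) ! k"
    have "s = t" using H[rule_format, of N] assms(1) len by (simp add: nth_append)
    moreover have "x ! k = y ! k" if "k < N" "k \<noteq> n" for k
      using H[rule_format, of k] that len by (simp add: nth_append)
    ultimately show "(\<forall>k<N. k \<noteq> n \<longrightarrow> x ! k = y ! k) \<and> s = t" by blast
  qed (use len in \<open>auto simp: nth_append less_Suc_eq\<close>)
  with len assms(1) show ?thesis by (auto simp: local_op_def nth_append)
qed

lemma local_op_snoc_last:
  assumes "x \<in> confs N" "y \<in> confs N"
  shows "local_op (Suc N) N m (x @ [s]) (y @ [t]) = (if x = y then m s t else 0)"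
proof -
  have len: "length x = N" "length y = N" using assms by (auto simp: confs_def)
  then have "(\<forall>k<Suc N. k \<noteq> N \<longrightarrow> (x @ [s]) ! k = (y @ [t]) ! k) \<longleftrightarrow> x = y"
    by (auto simp: nth_append less_Suc_eq intro: nth_equalityI)
  with len show ?thesis by (simp add: local_op_def nth_append)
qed

lemma mono_aux_snoc:
  assumes "n \<le> N" "x \<in> confs N" "y \<in> confs N"
  shows "mono_aux q eta (Suc N) l n i j (x @ [s]) (y @ [t]) =
         (if s = t then mono_aux q eta N l n i j x y else 0)"
  using assms
proof (induction n arbitrary: i j x y s t)
  case 0
  then show ?case by (auto simp: aux_id_def op_id_def op_zero_def)
next
  case (Suc n)
  have "op_mult (Suc N) (lax q (Suc N) n (l / eta n) i a) (mono_aux q eta (Suc N) l n a j) (x @ [s]) (y @ [t])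
     = (if s = t then op_mult N (lax q N n (l / eta n) i a) (mono_aux q eta N l n a j) x y else 0)" for a
  proof -
    have "op_mult (Suc N) (lax q (Suc N) n (l / eta n) i a) (mono_aux q eta (Suc N) l n a j) (x @ [s]) (y @ [t])
      = (\<Sum>z\<in>confs N.
          (if s then lax q N n (l / eta n) i a x z else 0) * (if t then mono_aux q eta N l n a j z y else 0) +
          (if s then 0 else lax q N n (l / eta n) i a x z) * (if t then 0 else mono_aux q eta N l n a j z y))"
      unfolding op_mult_def sum_confs_Suc
      using Suc by (intro sum.cong refl) (simp add: lax_def local_op_snoc)
    also have "\<dots> = (if s = t then op_mult N (lax q N n (l / eta n) i a) (mono_aux q eta N l n a j) x y else 0)"
      by (cases s; cases t) (simp_all add: op_mult_def)
    finally show ?thesis .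
  qed
  then show ?case by (simp add: aux_mult_def op_add_def)
qed

lemma monodromy_snoc:
  assumes "x \<in> confs N" "y \<in> confs N"
  shows "monodromy q eta (Suc N) l i j (x @ [s]) (y @ [t]) =
     lax_entry q (l / eta N) i 0 s t * monodromy q eta N l 0 j x y +
     lax_entry q (l / eta N) i 1 s t * monodromy q eta N l 1 j x y"
proof -
  have lax: "lax q (Suc N) N l' i a (x @ [s]) (z @ [r]) = (if x = z then lax_entry q l' i a s r else 0)"
    if "z \<in> confs N" for l' a z r
    using assms that by (simp add: lax_def lax_entry_def local_op_snoc_last)
  have "op_mult (Suc N) (lax q (Suc N) N (l / eta N) i a) (mono_aux q eta (Suc N) l N a j) (x @ [s]) (y @ [t])
     = lax_entry q (l / eta N) i a s t * monodromy q eta N l a j x y" for a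
  proof -
    have "op_mult (Suc N) (lax q (Suc N) N (l / eta N) i a) (mono_aux q eta (Suc N) l N a j) (x @ [s]) (y @ [t])
      = (\<Sum>z\<in>confs N. if x = z then lax_entry q (l / eta N) i a s t * monodromy q eta N l a j z y else 0)"
      unfolding op_mult_def sum_confs_Suc using assms
      by (intro sum.cong refl) (cases t; simp add: lax mono_aux_snoc monodromy_def)
    then show ?thesis using assms by (simp add: sum.delta)
  qed
  then show ?thesis by (simp add: monodromy_def aux_mult_def op_add_def)
qed

lemma op_mult_monodromy_snoc:
  assumes "x \<in> confs N" "y \<in> confs N"
  shows "op_mult (Suc N) (monodromy q eta (Suc N) la i j) (monodromy q eta (Suc N) mu k l) (x @ [s]) (y @ [t])
   = (\<Sum>r\<in>UNIV. \<Sum>a<2. \<Sum>b<2. lax_entry q (la / eta N) i a s r * lax_entry q (mu / eta N) k b r t *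
        op_mult N (monodromy q eta N la a j) (monodromy q eta N mu b l) x y)"
proof -
  let ?T = "monodromy q eta N" and ?T' = "monodromy q eta (Suc N)"
  have "op_mult N (\<lambda>a b. ?T' la i j (a @ [s]) (b @ [r])) (\<lambda>a b. ?T' mu k l (a @ [r]) (b @ [t])) x y
     = (\<Sum>a<2. \<Sum>b<2. lax_entry q (la / eta N) i a s r * lax_entry q (mu / eta N) k b r t *
        op_mult N (?T la a j) (?T mu b l) x y)" for r
  proof -
    have "op_mult N (\<lambda>a b. ?T' la i j (a @ [s]) (b @ [r])) (\<lambda>a b. ?T' mu k l (a @ [r]) (b @ [t])) x y
      = op_mult N (\<lambda>u v. \<Sum>a<2. lax_entry q (la / eta N) i a s r * ?T la a j u v)
                  (\<lambda>u v. \<Sum>b<2. lax_entry q (mu / eta N) k b r t * ?T mu b l u v) x y"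
      by (rule op_mult_cong) (simp_all add: monodromy_snoc assms sum_lessThan_2)
    then show ?thesis by (simp only: op_mult_sum2)
  qed
  then show ?thesis
    by (simp add: op_mult_def sum_confs_Suc sum.distrib sum_UNIV_bool)
qed


section \<open>The RTT relation\<close>

definition rmatrix :: "complex \<Rightarrow> complex \<Rightarrow> nat \<Rightarrow> nat \<Rightarrow> nat \<Rightarrow> nat \<Rightarrow> complex" where
  "rmatrix q u i k j l =
    (if i = j \<and> k = l then (if i = k then bracket (u * q) else bracket u)
     else if i = l \<and> k = j \<and> i \<noteq> k then q - 1 / q else 0)"

lemma rmatrix_lax_entry_yang_baxter:
  fixes q x y :: complex
  assumes "q \<noteq> 0" "x \<noteq> 0" "y \<noteq> 0" "i < 2" "k < 2" "a < 2" "b < 2"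
  shows "(\<Sum>i'<2. \<Sum>k'<2. \<Sum>r\<in>UNIV. rmatrix q (x / y) i k i' k' * lax_entry q x i' a s r * lax_entry q y k' b r t) =
         (\<Sum>a'<2. \<Sum>b'<2. \<Sum>r\<in>UNIV. lax_entry q y k b' s r * lax_entry q x i a' r t * rmatrix q (x / y) a' b' a b)"
proof -
  have "i = 0 \<or> i = Suc 0" "k = 0 \<or> k = Suc 0" "a = 0 \<or> a = Suc 0" "b = 0 \<or> b = Suc 0"
    using assms by auto
  then show ?thesis using assms(1-3)
    by (elim disjE; cases s; cases t; simp add: sum_lessThan_2 sum_UNIV_bool rmatrix_def lax_entry_simps;
        simp add: bracket_def field_simps)
qed

definition rtt_relation :: "complex \<Rightarrow> (nat \<Rightarrow> complex) \<Rightarrow> nat \<Rightarrow> complex \<Rightarrow> complex \<Rightarrow> bool" where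
  "rtt_relation q eta N la mu \<longleftrightarrow> (\<forall>i<2. \<forall>k<2. \<forall>j<2. \<forall>l<2. \<forall>x\<in>confs N. \<forall>y\<in>confs N.
     (\<Sum>i'<2. \<Sum>k'<2. rmatrix q (la / mu) i k i' k' *
        op_mult N (monodromy q eta N la i' j) (monodromy q eta N mu k' l) x y)
   = (\<Sum>j'<2. \<Sum>l'<2. op_mult N (monodromy q eta N mu k l') (monodromy q eta N la i j') x y *
        rmatrix q (la / mu) j' l' j l))"

lemma rtt_relation_Suc:
  assumes IH: "rtt_relation q eta N la mu"
    and q: "q \<noteq> 0" and la: "la \<noteq> 0" and mu: "mu \<noteq> 0" and e: "eta N \<noteq> 0"
  shows "rtt_relation q eta (Suc N) la mu"
  unfolding rtt_relation_def
proof (intro allI impI ballI)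
  fix i k j l x' y' assume ik: "i < (2::nat)" "k < (2::nat)" "j < (2::nat)" "l < (2::nat)"
    and xy: "x' \<in> confs (Suc N)" "y' \<in> confs (Suc N)"
  obtain x s where x: "x' = x @ [s]" "x \<in> confs N" using xy(1) by (rule confs_SucE)
  obtain y t where y: "y' = y @ [t]" "y \<in> confs N" using xy(2) by (rule confs_SucE)
  let ?T = "monodromy q eta N" and ?T' = "monodromy q eta (Suc N)"
  let ?R = "rmatrix q (la / mu)"
  let ?Ll = "lax_entry q (la / eta N)" and ?Lm = "lax_entry q (mu / eta N)"
  define P where "P a b = op_mult N (?T la a j) (?T mu b l) x y" for a b
  define Q where "Q b' l' a' j' = op_mult N (?T mu b' l') (?T la a' j') x y" for b' l' a' j'
  have ybe: "(\<Sum>i'<2. \<Sum>k'<2. \<Sum>r\<in>UNIV. ?R i k i' k' * ?Ll i' a s r * ?Lm k' b r t)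
      = (\<Sum>a'<2. \<Sum>b'<2. \<Sum>r\<in>UNIV. ?Lm k b' s r * ?Ll i a' r t * ?R a' b' a b)"
    if "a < 2" "b < 2" for a b
  proof -
    have "la / mu = (la / eta N) / (mu / eta N)" using e by simp
    then show ?thesis
      using rmatrix_lax_entry_yang_baxter[OF q _ _ ik(1,2) that, of "la / eta N" "mu / eta N"] la mu e
      by simp
  qed
  have IH': "(\<Sum>a<2. \<Sum>b<2. ?R a' b' a b * P a b) = (\<Sum>j'<2. \<Sum>l'<2. Q b' l' a' j' * ?R j' l' j l)"
    if "a' < 2" "b' < 2" for a' b'
    using IH ik x(2) y(2) that unfolding rtt_relation_def P_def Q_def by auto
  have "(\<Sum>i'<2. \<Sum>k'<2. ?R i k i' k' * op_mult (Suc N) (?T' la i' j) (?T' mu k' l) x' y')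
     = (\<Sum>a<2. \<Sum>b<2. (\<Sum>i'<2. \<Sum>k'<2. \<Sum>r\<in>UNIV. ?R i k i' k' * ?Ll i' a s r * ?Lm k' b r t) * P a b)"
    unfolding x y op_mult_monodromy_snoc[OF x(2) y(2)] P_def
    by (simp add: sum_lessThan_2 sum_UNIV_bool algebra_simps)
  also have "\<dots> = (\<Sum>a<2. \<Sum>b<2. (\<Sum>a'<2. \<Sum>b'<2. \<Sum>r\<in>UNIV. ?Lm k b' s r * ?Ll i a' r t * ?R a' b' a b) * P a b)"
    using ybe by (intro sum.cong refl) auto
  also have "\<dots> = (\<Sum>a'<2. \<Sum>b'<2. \<Sum>r\<in>UNIV. ?Lm k b' s r * ?Ll i a' r t * (\<Sum>a<2. \<Sum>b<2. ?R a' b' a b * P a b))"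
    by (simp add: sum_lessThan_2 sum_UNIV_bool algebra_simps)
  also have "\<dots> = (\<Sum>a'<2. \<Sum>b'<2. \<Sum>r\<in>UNIV. ?Lm k b' s r * ?Ll i a' r t * (\<Sum>j'<2. \<Sum>l'<2. Q b' l' a' j' * ?R j' l' j l))"
    using IH' by (intro sum.cong refl) auto
  also have "\<dots> = (\<Sum>j'<2. \<Sum>l'<2. op_mult (Suc N) (?T' mu k l') (?T' la i j') x' y' * ?R j' l' j l)"
    unfolding x y op_mult_monodromy_snoc[OF x(2) y(2)] Q_def
    by (simp add: sum_lessThan_2 sum_UNIV_bool algebra_simps)
  finally show "(\<Sum>i'<2. \<Sum>k'<2. ?R i k i' k' * op_mult (Suc N) (?T' la i' j) (?T' mu k' l) x' y')
     = (\<Sum>j'<2. \<Sum>l'<2. op_mult (Suc N) (?T' mu k l') (?T' la i j') x' y' * ?R j' l' j l)" .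
qed

lemma rtt_relation_holds:
  assumes "q \<noteq> 0" "la \<noteq> 0" "mu \<noteq> 0" "\<forall>n<N. eta n \<noteq> 0"
  shows "rtt_relation q eta N la mu"
  using assms(4)
proof (induction N)
  case 0
  then show ?case
    by (auto simp: rtt_relation_def confs_0 monodromy_def op_mult_def aux_id_def op_id_def op_zero_def
        sum_lessThan_2 numeral_2_eq_2 less_Suc_eq)
next
  case (Suc N)
  then show ?case using rtt_relation_Suc assms(1-3) by auto
qed

lemma rtt_relation_entry:
  assumes "rtt_relation q eta N la mu" "i < 2" "k < 2" "j < 2" "l < 2" "x \<in> confs N" "y \<in> confs N"
  shows "(\<Sum>i'<2. \<Sum>k'<2. rmatrix q (la / mu) i k i' k' *
            op_mult N (monodromy q eta N la i' j) (monodromy q eta N mu k' l) x y)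
       = (\<Sum>j'<2. \<Sum>l'<2. op_mult N (monodromy q eta N mu k l') (monodromy q eta N la i j') x y *
            rmatrix q (la / mu) j' l' j l)"
  using assms unfolding rtt_relation_def by blast

lemma exchange_DB:
  assumes "rtt_relation q eta N la mu" "x \<in> confs N" "y \<in> confs N"
  shows "bracket (la / mu) * op_mult N (opD q eta N la) (opB q eta N mu) x y
       + (q - 1/q) * op_mult N (opB q eta N la) (opD q eta N mu) x y
     = bracket (la / mu * q) * op_mult N (opB q eta N mu) (opD q eta N la) x y"
  using rtt_relation_entry[OF assms(1) _ _ _ _ assms(2,3), of "Suc 0" 0 "Suc 0" "Suc 0"]
  by (simp add: sum_lessThan_2 rmatrix_def opB_eq algebra_simps)

lemma exchange_CD:
  assumes "rtt_relation q eta N la mu" "x \<in> confs N" "y \<in> confs N"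
  shows "bracket (la / mu * q) * op_mult N (opD q eta N la) (opC q eta N mu) x y
     = bracket (la / mu) * op_mult N (opC q eta N mu) (opD q eta N la) x y
       + (q - 1/q) * op_mult N (opD q eta N mu) (opC q eta N la) x y"
  using rtt_relation_entry[OF assms(1) _ _ _ _ assms(2,3), of "Suc 0" "Suc 0" "Suc 0" 0]
  by (simp add: sum_lessThan_2 rmatrix_def opC_eq algebra_simps)

lemma exchange_CC:
  assumes "rtt_relation q eta N la mu" "bracket (la / mu * q) \<noteq> 0" "x \<in> confs N" "y \<in> confs N"
  shows "op_mult N (opC q eta N la) (opC q eta N mu) x y = op_mult N (opC q eta N mu) (opC q eta N la) x y"
  using rtt_relation_entry[OF assms(1) _ _ _ _ assms(3,4), of "Suc 0" "Suc 0" 0 0] assms(2)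
  by (simp add: sum_lessThan_2 rmatrix_def opC_eq algebra_simps)

text \<open>At \<open>\<lambda> / \<mu> = q\<^sup>-\<^sup>1\<close> the R-matrix entry \<open>bracket (\<lambda> / \<mu> * q)\<close> vanishes, so these
  two exchange relations degenerate into commutation rules.\<close>

lemma exchange_AB_shifted:
  assumes "rtt_relation q eta N (la / q) la" "q \<noteq> 0" "q - 1/q \<noteq> 0" "la \<noteq> 0"
    "x \<in> confs N" "y \<in> confs N"
  shows "op_mult N (opA q eta N la) (opB q eta N (la / q)) x y
       = op_mult N (opB q eta N la) (opA q eta N (la / q)) x y"
proof -
  have "la / q / la = 1 / q" using assms by simp
  then have "(q - 1/q) * (op_mult N (opA q eta N la) (opB q eta N (la / q)) x y
       - op_mult N (opB q eta N la) (opA q eta N (la / q)) x y) = 0"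
    using rtt_relation_entry[OF assms(1) _ _ _ _ assms(5,6), of 0 0 0 "Suc 0"] assms(2-4)
    by (simp add: sum_lessThan_2 rmatrix_def opB_eq bracket_def algebra_simps)
  then show ?thesis using assms(3) by simp
qed

lemma exchange_DC_shifted:
  assumes "rtt_relation q eta N (la / q) la" "q \<noteq> 0" "q - 1/q \<noteq> 0" "la \<noteq> 0"
    "x \<in> confs N" "y \<in> confs N"
  shows "op_mult N (opD q eta N la) (opC q eta N (la / q)) x y
       = op_mult N (opC q eta N la) (opD q eta N (la / q)) x y"
proof -
  have "la / q / la = 1 / q" using assms by simp
  then have "(q - 1/q) * (op_mult N (opD q eta N la) (opC q eta N (la / q)) x y
       - op_mult N (opC q eta N la) (opD q eta N (la / q)) x y) = 0"
    using rtt_relation_entry[OF assms(1) _ _ _ _ assms(5,6), of "Suc 0" "Suc 0" 0 "Suc 0"] assms(2-4)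
    by (simp add: sum_lessThan_2 rmatrix_def opC_eq bracket_def algebra_simps)
  then show ?thesis using assms(3) by simp
qed


section \<open>The quantum determinant\<close>

definition qdet_relation :: "complex \<Rightarrow> (nat \<Rightarrow> complex) \<Rightarrow> nat \<Rightarrow> complex \<Rightarrow> bool" where
  "qdet_relation q eta N la \<longleftrightarrow> (\<forall>x\<in>confs N. \<forall>y\<in>confs N.
     op_mult N (opD q eta N la) (opA q eta N (la / q)) x y
       = op_mult N (opC q eta N la) (opB q eta N (la / q)) x y
         - (if x = y then a_fun q eta N la * d_fun eta N (la / q) else 0)
   \<and> op_mult N (opA q eta N la) (opD q eta N (la / q)) x y
       = op_mult N (opB q eta N la) (opC q eta N (la / q)) x y
         - (if x = y then a_fun q eta N la * d_fun eta N (la / q) else 0))"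

lemma qdet_relation_Suc:
  assumes IH: "qdet_relation q eta N la" and R: "rtt_relation q eta N (la / q) la"
    and q: "q \<noteq> 0" "q - 1/q \<noteq> 0" and la: "la \<noteq> 0" and e: "eta N \<noteq> 0"
  shows "qdet_relation q eta (Suc N) la"
  unfolding qdet_relation_def
proof (intro ballI)
  fix x' y' assume xy: "x' \<in> confs (Suc N)" "y' \<in> confs (Suc N)"
  obtain x s where x: "x' = x @ [s]" "x \<in> confs N" using xy(1) by (rule confs_SucE)
  obtain y t where y: "y' = y @ [t]" "y \<in> confs N" using xy(2) by (rule confs_SucE)
  have shift: "la / q / eta N * q = la / eta N" using q by (simp add: field_simps)
  have bracket_prod: "bracket (la / (q * eta N)) * bracket (la * q / eta N)
      = bracket (la / eta N) * bracket (la / eta N) - (q - 1/q) * (q - 1/q)"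
    using q la e by (simp add: bracket_def field_simps)
  note I = IH[unfolded qdet_relation_def opB_eq opC_eq, rule_format, OF x(2) y(2)]
  note AB = exchange_AB_shifted[OF R q la x(2) y(2), unfolded opB_eq]
  note DC = exchange_DC_shifted[OF R q la x(2) y(2), unfolded opC_eq]
  show "op_mult (Suc N) (opD q eta (Suc N) la) (opA q eta (Suc N) (la / q)) x' y'
       = op_mult (Suc N) (opC q eta (Suc N) la) (opB q eta (Suc N) (la / q)) x' y'
         - (if x' = y' then a_fun q eta (Suc N) la * d_fun eta (Suc N) (la / q) else 0)
   \<and> op_mult (Suc N) (opA q eta (Suc N) la) (opD q eta (Suc N) (la / q)) x' y'
       = op_mult (Suc N) (opB q eta (Suc N) la) (opC q eta (Suc N) (la / q)) x' y'
         - (if x' = y' then a_fun q eta (Suc N) la * d_fun eta (Suc N) (la / q) else 0)"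
    unfolding x y opB_eq opC_eq op_mult_monodromy_snoc[OF x(2) y(2)] a_fun_Suc d_fun_Suc
    by (cases s; cases t; simp add: sum_UNIV_bool sum_lessThan_2 lax_entry_simps shift I AB DC;
        simp add: algebra_simps q bracket_prod)
qed

lemma qdet_relation_holds:
  assumes "q \<noteq> 0" "q - 1/q \<noteq> 0" "la \<noteq> 0" "\<forall>n<N. eta n \<noteq> 0"
  shows "qdet_relation q eta N la"
  using assms(4)
proof (induction N)
  case 0
  then show ?case
    by (simp add: qdet_relation_def confs_0 monodromy_def op_mult_def aux_id_def op_id_def op_zero_def
        opB_eq opC_eq a_fun_def d_fun_def)
next
  case (Suc N)
  have "rtt_relation q eta N (la / q) la"
    using rtt_relation_holds[of q "la / q" la N eta] assms Suc.prems by auto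
  then show ?case using qdet_relation_Suc assms(1-3) Suc by auto
qed


lemma monodromy_ref_state_right:
  assumes "x \<in> confs N"
  shows "opA q eta N l x (replicate N True) = (if x = replicate N True then - a_fun q eta N l else 0)
       \<and> opC q eta N l x (replicate N True) = 0
       \<and> opD q eta N l x (replicate N True) = (if x = replicate N True then d_fun eta N l else 0)"
  using assms
proof (induction N arbitrary: x)
  case 0
  then show ?case
    by (simp add: confs_0 monodromy_def opC_eq aux_id_def op_id_def op_zero_def a_fun_def d_fun_def)
next
  case (Suc N)
  obtain x' s where x: "x = x' @ [s]" "x' \<in> confs N" using Suc.prems by (rule confs_SucE)
  have vac: "replicate (Suc N) True = replicate N True @ [True]" "replicate N True \<in> confs N"
    by (simp_all add: replicate_append_same confs_def)
  show ?case using Suc.IH[OF x(2)] unfolding x vac(1) opC_eq monodromy_snoc[OF x(2) vac(2)]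
    by (cases s) (auto simp: lax_entry_simps a_fun_Suc d_fun_Suc)
qed

lemma monodromy_ref_state_left:
  assumes "y \<in> confs N"
  shows "opA q eta N l (replicate N True) y = (if y = replicate N True then - a_fun q eta N l else 0)
       \<and> opB q eta N l (replicate N True) y = 0
       \<and> opD q eta N l (replicate N True) y = (if y = replicate N True then d_fun eta N l else 0)"
  using assms
proof (induction N arbitrary: y)
  case 0
  then show ?case
    by (simp add: confs_0 monodromy_def opB_eq aux_id_def op_id_def op_zero_def a_fun_def d_fun_def)
next
  case (Suc N)
  obtain y' s where y: "y = y' @ [s]" "y' \<in> confs N" using Suc.prems by (rule confs_SucE)
  have vac: "replicate (Suc N) True = replicate N True @ [True]" "replicate N True \<in> confs N"
    by (simp_all add: replicate_append_same confs_def)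
  show ?case using Suc.IH[OF y(2)] unfolding y vac(1) opB_eq monodromy_snoc[OF vac(2) y(2)]
    by (cases s) (auto simp: lax_entry_simps a_fun_Suc d_fun_Suc)
qed


lemma isCont_lax_entry:
  assumes "l0 \<noteq> 0" "e \<noteq> 0" "q \<noteq> 0"
  shows "isCont (\<lambda>l. lax_entry q (l / e) i a s t) l0"
proof -
  have "isCont (\<lambda>l. x_plus q (l / e)) l0" "isCont (\<lambda>l. x_minus q (l / e)) l0"
    unfolding x_plus_def x_minus_def using assms by (intro continuous_intros; auto)+
  then show ?thesis
    unfolding lax_entry_def by (cases "i = 0"; cases "a = 0"; cases "a = 1"; cases "i = 1")
      (auto intro!: continuous_intros)
qed

lemma isCont_monodromy:
  assumes "l0 \<noteq> 0" "q \<noteq> 0" "\<forall>n<N. eta n \<noteq> 0" "x \<in> confs N" "y \<in> confs N"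
  shows "isCont (\<lambda>l. monodromy q eta N l i j x y) l0"
  using assms(3-5)
proof (induction N arbitrary: x y i j)
  case 0
  then show ?case by (simp add: monodromy_def aux_id_def)
next
  case (Suc N)
  obtain x' s where x: "x = x' @ [s]" "x' \<in> confs N" using Suc.prems by (blast elim: confs_SucE)
  obtain y' t where y: "y = y' @ [t]" "y' \<in> confs N" using Suc.prems by (blast elim: confs_SucE)
  have "eta N \<noteq> 0" using Suc.prems by auto
  then show ?case unfolding x y monodromy_snoc[OF x(2) y(2)]
    using Suc.IH[OF _ x(2) y(2)] Suc.prems isCont_lax_entry[OF assms(1) _ assms(2)]
    by (intro continuous_intros) auto
qed

lemma eq_at_by_continuity:
  fixes f g :: "complex \<Rightarrow> complex"
  assumes "isCont f l0" "isCont g l0" "finite F" "\<And>l. l \<notin> F \<Longrightarrow> f l = g l"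
  shows "f l0 = g l0"
proof -
  have "open (- (F - {l0}))" using assms(3) by (intro open_Compl finite_imp_closed) auto
  then have "eventually (\<lambda>l. l \<in> - (F - {l0}) - {l0}) (at l0)"
    by (rule eventually_at_in_open) auto
  then have "eventually (\<lambda>l. f l - g l = 0) (at l0)"
    by (rule eventually_mono) (auto intro: assms(4))
  then have "((\<lambda>l. f l - g l) \<longlongrightarrow> 0) (at l0)" by (rule tendsto_eventually)
  moreover have "((\<lambda>l. f l - g l) \<longlongrightarrow> f l0 - g l0) (at l0)"
    using assms(1,2) by (intro tendsto_diff) (simp_all add: isCont_def)
  ultimately show ?thesis using tendsto_unique[OF at_neq_bot] by fastforce
qed


section \<open>Eigenvectors of D\<close>

definition d_eigenvalue :: "complex \<Rightarrow> (nat \<Rightarrow> complex) \<Rightarrow> nat \<Rightarrow> (nat \<Rightarrow> bool) \<Rightarrow> complex \<Rightarrow> complex" where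
  "d_eigenvalue q eta N P l = (\<Prod>n<N. bracket (l / eta n * (if P n then q else 1)))"

lemma d_eigenvalue_empty: "d_eigenvalue q eta N (\<lambda>n. False) l = d_fun eta N l"
  by (simp add: d_eigenvalue_def d_fun_def bracket_def field_simps)

lemma d_eigenvalue_cong: "(\<And>n. n < N \<Longrightarrow> P n = P' n) \<Longrightarrow> d_eigenvalue q eta N P = d_eigenvalue q eta N P'"
  unfolding d_eigenvalue_def by (intro ext prod.cong) auto

lemma isCont_d_eigenvalue:
  "q \<noteq> 0 \<Longrightarrow> \<forall>n<N. eta n \<noteq> 0 \<Longrightarrow> l0 \<noteq> 0 \<Longrightarrow> isCont (d_eigenvalue q eta N P) l0"
  unfolding d_eigenvalue_def bracket_def by (intro continuous_intros) auto

lemma d_eigenvalue_eq_0: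
  assumes "n < N" "eta n \<noteq> 0" "\<not> P n"
  shows "d_eigenvalue q eta N P (eta n) = 0"
  unfolding d_eigenvalue_def using assms by (intro prod_zero) (auto intro!: bexI[of _ n])

lemma d_eigenvalue_upd:
  assumes "n < N" "\<not> P n"
  shows "d_eigenvalue q eta N (P(n := True)) l * bracket (l / eta n)
       = d_eigenvalue q eta N P l * bracket (l / eta n * q)"
proof -
  define f where "f P' m = bracket (l / eta m * (if P' m then q else 1))" for P' m
  have split: "(\<Prod>m<N. f P' m) = f P' n * (\<Prod>m\<in>{..<N} - {n}. f P' m)" for P'
    using assms(1) by (intro prod.remove) auto
  have "(\<Prod>m\<in>{..<N} - {n}. f (P(n := True)) m) = (\<Prod>m\<in>{..<N} - {n}. f P m)"
    by (intro prod.cong) (auto simp: f_def)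
  then show ?thesis
    using assms(2) unfolding d_eigenvalue_def f_def[symmetric] split by (simp add: f_def)
qed

lemma opD_opB_eigenvector_off_poles:
  assumes q: "q \<noteq> 0" and e: "\<forall>n<N. eta n \<noteq> 0" and n: "n < N" "\<not> P n"
    and eig: "\<And>l x. l \<noteq> 0 \<Longrightarrow> x \<in> confs N \<Longrightarrow>
      op_vec N (opD q eta N l) w x = d_eigenvalue q eta N P l * w x"
    and l: "l \<notin> {0, eta n, - eta n}" and x: "x \<in> confs N"
  shows "op_vec N (opD q eta N l) (op_vec N (opB q eta N (eta n)) w) x
       = d_eigenvalue q eta N (P(n := True)) l * op_vec N (opB q eta N (eta n)) w x"
proof -
  let ?B = "opB q eta N (eta n)"
  have en: "eta n \<noteq> 0" using e n by auto
  have l0: "l \<noteq> 0" and bl: "bracket (l / eta n) \<noteq> 0"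
    using l en by (auto simp: bracket_eq_0_iff field_simps)
  have rtt: "rtt_relation q eta N l (eta n)"
    using rtt_relation_holds q l0 en e by blast
  have "bracket (l / eta n) * op_vec N (op_mult N (opD q eta N l) ?B) w x
      + (q - 1/q) * op_vec N (op_mult N (opB q eta N l) (opD q eta N (eta n))) w x
      = bracket (l / eta n * q) * op_vec N (op_mult N ?B (opD q eta N l)) w x"
    by (rule op_vec_linear_relation) (rule exchange_DB[OF rtt x])
  moreover have "op_vec N (op_mult N (opB q eta N l) (opD q eta N (eta n))) w x = 0"
  proof -
    have "op_vec N (opD q eta N (eta n)) w y = 0" if "y \<in> confs N" for y
      using eig[OF en that] d_eigenvalue_eq_0[of n N eta P q] n en by simp
    then show ?thesis
      unfolding op_vec_mult by (subst op_vec_cong[where w' = "\<lambda>y. 0"]) (simp_all add: op_vec_def)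
  qed
  moreover have "op_vec N (op_mult N ?B (opD q eta N l)) w x = d_eigenvalue q eta N P l * op_vec N ?B w x"
  proof -
    have "op_vec N (op_mult N ?B (opD q eta N l)) w x = op_vec N ?B (\<lambda>y. d_eigenvalue q eta N P l * w y) x"
      unfolding op_vec_mult using eig[OF l0] by (intro op_vec_cong) simp
    then show ?thesis by (simp only: op_vec_scale)
  qed
  ultimately have "bracket (l / eta n) * op_vec N (opD q eta N l) (op_vec N ?B w) x
      = (d_eigenvalue q eta N P l * bracket (l / eta n * q)) * op_vec N ?B w x"
    by (simp add: op_vec_mult algebra_simps)
  also have "d_eigenvalue q eta N P l * bracket (l / eta n * q)
      = bracket (l / eta n) * d_eigenvalue q eta N (P(n := True)) l"
    using d_eigenvalue_upd[of n N P q eta l] n by (simp add: ac_simps)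
  finally show ?thesis using bl by (simp add: mult.assoc)
qed

lemma opD_opB_eigenvector:
  assumes q: "q \<noteq> 0" and e: "\<forall>n<N. eta n \<noteq> 0" and n: "n < N" "\<not> P n"
    and eig: "\<And>l x. l \<noteq> 0 \<Longrightarrow> x \<in> confs N \<Longrightarrow>
      op_vec N (opD q eta N l) w x = d_eigenvalue q eta N P l * w x"
    and l0: "l0 \<noteq> 0" and x: "x \<in> confs N"
  shows "op_vec N (opD q eta N l0) (op_vec N (opB q eta N (eta n)) w) x
       = d_eigenvalue q eta N (P(n := True)) l0 * op_vec N (opB q eta N (eta n)) w x"
  by (rule eq_at_by_continuity[where F = "{0, eta n, - eta n}", OF _ _ _ opD_opB_eigenvector_off_poles[OF q e n eig _ x]])
    (use q e l0 x in \<open>auto intro!: continuous_intros isCont_monodromy isCont_d_eigenvalue simp: op_vec_def\<close>)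

lemma opD_opC_left_eigenvector_off_poles:
  assumes q: "q \<noteq> 0" and e: "\<forall>n<N. eta n \<noteq> 0" and n: "n < N" "\<not> P n"
    and eig: "\<And>l y. l \<noteq> 0 \<Longrightarrow> y \<in> confs N \<Longrightarrow>
      covec_op N v (opD q eta N l) y = d_eigenvalue q eta N P l * v y"
    and l: "l \<notin> {0, eta n, - eta n}" and y: "y \<in> confs N"
  shows "covec_op N (covec_op N v (opC q eta N (eta n))) (opD q eta N l) y
       = d_eigenvalue q eta N (P(n := True)) l * covec_op N v (opC q eta N (eta n)) y"
proof -
  let ?C = "opC q eta N (eta n)"
  have en: "eta n \<noteq> 0" using e n by auto
  have l0: "l \<noteq> 0" and bl: "bracket (l / eta n) \<noteq> 0"
    using l en by (auto simp: bracket_eq_0_iff field_simps)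
  have rtt: "rtt_relation q eta N l (eta n)"
    using rtt_relation_holds q l0 en e by blast
  have "bracket (l / eta n * q) * covec_op N v (op_mult N (opD q eta N l) ?C) y
      = bracket (l / eta n) * covec_op N v (op_mult N ?C (opD q eta N l)) y
      + (q - 1/q) * covec_op N v (op_mult N (opD q eta N (eta n)) (opC q eta N l)) y"
    by (rule covec_op_linear_relation) (rule exchange_CD[OF rtt _ y])
  moreover have "covec_op N v (op_mult N (opD q eta N (eta n)) (opC q eta N l)) y = 0"
  proof -
    have "covec_op N v (opD q eta N (eta n)) x = 0" if "x \<in> confs N" for x
      using eig[OF en that] d_eigenvalue_eq_0[of n N eta P q] n en by simp
    then show ?thesis
      unfolding covec_op_mult by (subst covec_op_cong[where v' = "\<lambda>x. 0"]) (simp_all add: covec_op_def)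
  qed
  moreover have "covec_op N v (op_mult N (opD q eta N l) ?C) y = d_eigenvalue q eta N P l * covec_op N v ?C y"
  proof -
    have "covec_op N v (op_mult N (opD q eta N l) ?C) y = covec_op N (\<lambda>x. d_eigenvalue q eta N P l * v x) ?C y"
      unfolding covec_op_mult using eig[OF l0] by (intro covec_op_cong) simp_all
    then show ?thesis by (simp only: covec_op_scale)
  qed
  ultimately have "bracket (l / eta n) * covec_op N (covec_op N v ?C) (opD q eta N l) y
      = (d_eigenvalue q eta N P l * bracket (l / eta n * q)) * covec_op N v ?C y"
    by (simp add: covec_op_mult algebra_simps)
  also have "d_eigenvalue q eta N P l * bracket (l / eta n * q)
      = bracket (l / eta n) * d_eigenvalue q eta N (P(n := True)) l"
    using d_eigenvalue_upd[of n N P q eta l] n by (simp add: ac_simps)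
  finally show ?thesis using bl by (simp add: mult.assoc)
qed

lemma opD_opC_left_eigenvector:
  assumes q: "q \<noteq> 0" and e: "\<forall>n<N. eta n \<noteq> 0" and n: "n < N" "\<not> P n"
    and eig: "\<And>l y. l \<noteq> 0 \<Longrightarrow> y \<in> confs N \<Longrightarrow>
      covec_op N v (opD q eta N l) y = d_eigenvalue q eta N P l * v y"
    and l0: "l0 \<noteq> 0" and y: "y \<in> confs N"
  shows "covec_op N (covec_op N v (opC q eta N (eta n))) (opD q eta N l0) y
       = d_eigenvalue q eta N (P(n := True)) l0 * covec_op N v (opC q eta N (eta n)) y"
  by (rule eq_at_by_continuity[where F = "{0, eta n, - eta n}", OF _ _ _ opD_opC_left_eigenvector_off_poles[OF q e n eig _ y]])
    (use q e l0 y in \<open>auto intro!: continuous_intros isCont_monodromy isCont_d_eigenvalue simp: covec_op_def\<close>)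

definition right_sov_from :: "complex \<Rightarrow> (nat \<Rightarrow> complex) \<Rightarrow> nat \<Rightarrow> bool list \<Rightarrow> nat \<Rightarrow> qvec" where
  "right_sov_from q eta N h k =
     foldr (\<lambda>n w. if h ! n then (\<lambda>x. op_vec N (opB q eta N (eta n)) w x / a_fun q eta N (eta n)) else w)
       [k..<N] (\<lambda>x. ref_state N x / norm_sov eta N)"

definition left_sov_upto :: "complex \<Rightarrow> (nat \<Rightarrow> complex) \<Rightarrow> nat \<Rightarrow> bool list \<Rightarrow> nat \<Rightarrow> qvec" where
  "left_sov_upto q eta N h k =
     fold (\<lambda>n v. if h ! n then (\<lambda>y. covec_op N v (opC q eta N (eta n)) y / d_fun eta N (eta n / q)) else v)
       [0..<k] (\<lambda>x. ref_state N x / norm_sov eta N)"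

lemma right_sov_eq: "right_sov q eta N h = right_sov_from q eta N h 0"
  by (simp add: right_sov_def right_sov_from_def)

lemma left_sov_eq: "left_sov q eta N h = left_sov_upto q eta N h N"
  by (simp add: left_sov_def left_sov_upto_def)

lemma right_sov_from_N: "right_sov_from q eta N h N = (\<lambda>x. ref_state N x / norm_sov eta N)"
  by (simp add: right_sov_from_def)

lemma left_sov_upto_0: "left_sov_upto q eta N h 0 = (\<lambda>x. ref_state N x / norm_sov eta N)"
  by (simp add: left_sov_upto_def)

lemma right_sov_from_step:
  "k < N \<Longrightarrow> right_sov_from q eta N h k =
    (if h ! k then (\<lambda>x. op_vec N (opB q eta N (eta k)) (right_sov_from q eta N h (Suc k)) x / a_fun q eta N (eta k))
     else right_sov_from q eta N h (Suc k))"
  by (simp add: right_sov_from_def upt_conv_Cons)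

lemma left_sov_upto_Suc:
  "left_sov_upto q eta N h (Suc k) =
    (if h ! k then (\<lambda>y. covec_op N (left_sov_upto q eta N h k) (opC q eta N (eta k)) y / d_fun eta N (eta k / q))
     else left_sov_upto q eta N h k)"
  by (simp add: left_sov_upto_def)

lemma ref_state_in_confs [simp]: "replicate N True \<in> confs N"
  by (simp add: confs_def)

lemma op_vec_ref_state: "op_vec N X (\<lambda>y. ref_state N y / c) x = X x (replicate N True) / c"
proof -
  have "op_vec N X (ref_state N) x = X x (replicate N True)"
    by (simp add: op_vec_def ref_state_def if_distrib cong: if_cong)
  then show ?thesis by (simp add: op_vec_divide)
qed

lemma covec_op_ref_state: "covec_op N (\<lambda>y. ref_state N y / c) X y = X (replicate N True) y / c"
proof -
  have "covec_op N (ref_state N) X y = (\<Sum>x\<in>confs N. if x = replicate N True then X x y else 0)"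
    unfolding covec_op_def ref_state_def by (intro sum.cong) auto
  then have "covec_op N (ref_state N) X y = X (replicate N True) y"
    by (simp add: sum.delta)
  then show ?thesis by (simp add: covec_op_divide)
qed

lemma opD_right_sov_from:
  assumes q: "q \<noteq> 0" and e: "\<forall>n<N. eta n \<noteq> 0" and k: "k \<le> N" and l: "l \<noteq> 0" and x: "x \<in> confs N"
  shows "op_vec N (opD q eta N l) (right_sov_from q eta N h k) x
       = d_eigenvalue q eta N (\<lambda>n. h ! n \<and> k \<le> n) l * right_sov_from q eta N h k x"
  using k l x
proof (induction k arbitrary: l x rule: inc_induct)
  case base
  have "d_eigenvalue q eta N (\<lambda>n. h ! n \<and> N \<le> n) = d_eigenvalue q eta N (\<lambda>n. False)"
    by (rule d_eigenvalue_cong) auto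
  then show ?case
    using monodromy_ref_state_right[OF base(2), of q eta l]
    unfolding right_sov_from_N op_vec_ref_state by (simp add: d_eigenvalue_empty ref_state_def)
next
  case (step n)
  have P: "(\<lambda>m. h ! m \<and> n \<le> m) = (if h ! n then (\<lambda>m. h ! m \<and> Suc n \<le> m)(n := True) else (\<lambda>m. h ! m \<and> Suc n \<le> m))"
    by (auto simp: fun_eq_iff Suc_le_eq le_less)
  show ?case
  proof (cases "h ! n")
    case False
    then show ?thesis using step by (simp add: right_sov_from_step P)
  next
    case True
    have "op_vec N (opD q eta N l) (op_vec N (opB q eta N (eta n)) (right_sov_from q eta N h (Suc n))) x
        = d_eigenvalue q eta N (\<lambda>m. h ! m \<and> n \<le> m) l * op_vec N (opB q eta N (eta n)) (right_sov_from q eta N h (Suc n)) x"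
      unfolding P using True step by (simp add: opD_opB_eigenvector[OF q e])
    then show ?thesis using True step.hyps by (simp add: right_sov_from_step op_vec_divide)
  qed
qed

lemma opD_left_sov_upto:
  assumes q: "q \<noteq> 0" and e: "\<forall>n<N. eta n \<noteq> 0" and k: "k \<le> N" and l: "l \<noteq> 0" and y: "y \<in> confs N"
  shows "covec_op N (left_sov_upto q eta N h k) (opD q eta N l) y
       = d_eigenvalue q eta N (\<lambda>n. h ! n \<and> n < k) l * left_sov_upto q eta N h k y"
  using k l y
proof (induction k arbitrary: l y)
  case 0
  have "d_eigenvalue q eta N (\<lambda>n. h ! n \<and> n < 0) = d_eigenvalue q eta N (\<lambda>n. False)"
    by (rule d_eigenvalue_cong) auto
  then show ?case
    using monodromy_ref_state_left[OF "0.prems"(3), of q eta l]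
    unfolding left_sov_upto_0 covec_op_ref_state by (simp add: d_eigenvalue_empty ref_state_def)
next
  case (Suc n)
  have P: "(\<lambda>m. h ! m \<and> m < Suc n) = (if h ! n then (\<lambda>m. h ! m \<and> m < n)(n := True) else (\<lambda>m. h ! m \<and> m < n))"
    by (auto simp: fun_eq_iff less_Suc_eq)
  show ?case
  proof (cases "h ! n")
    case False
    then show ?thesis using Suc by (simp add: left_sov_upto_Suc P)
  next
    case True
    have "covec_op N (covec_op N (left_sov_upto q eta N h n) (opC q eta N (eta n))) (opD q eta N l) y
        = d_eigenvalue q eta N (\<lambda>m. h ! m \<and> m < Suc n) l * covec_op N (left_sov_upto q eta N h n) (opC q eta N (eta n)) y"
      unfolding P using True Suc by (simp add: opD_opC_left_eigenvector[OF q e])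
    then show ?thesis using True by (simp add: left_sov_upto_Suc covec_op_divide)
  qed
qed

lemma opD_right_sov:
  assumes "q \<noteq> 0" "\<forall>n<N. eta n \<noteq> 0" "l \<noteq> 0" "x \<in> confs N"
  shows "op_vec N (opD q eta N l) (right_sov q eta N h) x
       = d_eigenvalue q eta N (\<lambda>n. h ! n) l * right_sov q eta N h x"
  using opD_right_sov_from[OF assms(1,2) le0 assms(3,4)] by (simp add: right_sov_eq)

lemma opD_left_sov:
  assumes "q \<noteq> 0" "\<forall>n<N. eta n \<noteq> 0" "l \<noteq> 0" "y \<in> confs N"
  shows "covec_op N (left_sov q eta N h) (opD q eta N l) y
       = d_eigenvalue q eta N (\<lambda>n. h ! n) l * left_sov q eta N h y"
proof -
  have "d_eigenvalue q eta N (\<lambda>n. h ! n \<and> n < N) = d_eigenvalue q eta N (\<lambda>n. h ! n)"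
    by (rule d_eigenvalue_cong) auto
  then show ?thesis
    using opD_left_sov_upto[OF assms(1,2) order.refl assms(3,4)] by (simp add: left_sov_eq)
qed


section \<open>Orthogonality\<close>

lemma bracket_ratio_ne_0:
  assumes "norm_sov eta N \<noteq> 0" "a < N" "b < N" "a \<noteq> b"
  shows "bracket (eta a / eta b) \<noteq> 0"
proof -
  have "bracket (eta i / eta j) \<noteq> 0" if ij: "j < i" "i < N" for i j
  proof
    assume "bracket (eta i / eta j) = 0"
    then have z: "eta i / eta j - eta j / eta i = 0" by (simp add: bracket_def)
    have row: "(\<Prod>k\<in>{j<..<N}. csqrt (eta k / eta j - eta j / eta k)) = 0"
      by (intro prod_zero) (use ij z in \<open>auto intro!: bexI[of _ i]\<close>)
    have "norm_sov eta N = 0"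
      unfolding norm_sov_def by (intro prod_zero[OF finite_lessThan] bexI[of _ j]) (use ij row in simp_all)
    with assms(1) show False by simp
  qed
  moreover have "bracket (eta a / eta b) = - bracket (eta b / eta a)"
    using bracket_inverse[of "eta b / eta a"] by simp
  ultimately show ?thesis using assms(2-4) by (cases "b < a") auto
qed

lemma bracket_shift_ne_0:
  assumes "a_fun q eta N (eta n) \<noteq> 0" "m < N"
  shows "bracket (eta n / eta m * q) \<noteq> 0"
proof
  assume "bracket (eta n / eta m * q) = 0"
  then have "eta n * q / eta m - eta m / (eta n * q) = 0" by (simp add: bracket_def field_simps)
  with assms(2) have "a_fun q eta N (eta n) = 0" unfolding a_fun_def by (auto intro!: bexI[of _ m])
  with assms(1) show False by simp
qed

lemma d_eigenvalue_shift_eq_0: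
  assumes "n < N" "eta n \<noteq> 0" "q \<noteq> 0" "P n"
  shows "d_eigenvalue q eta N P (eta n / q) = 0"
  unfolding d_eigenvalue_def using assms by (intro prod_zero) (auto intro!: bexI[of _ n])

lemma d_eigenvalue_shift_ne_0:
  assumes q: "q \<noteq> 0" "q - 1/q \<noteq> 0" and wn: "norm_sov eta N \<noteq> 0"
    and wa: "\<forall>n<N. a_fun q eta N (eta n) \<noteq> 0" and m: "m < N" "eta m \<noteq> 0" "\<not> P m"
  shows "d_eigenvalue q eta N P (eta m / q) \<noteq> 0"
proof -
  have "bracket (eta m / q / eta n * (if P n then q else 1)) \<noteq> 0" if n: "n < N" for n
  proof -
    consider "n = m" | "n \<noteq> m" "P n" | "n \<noteq> m" "\<not> P n" by blast
    then show ?thesis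
    proof cases
      case 1
      then show ?thesis using m q by (simp add: bracket_def field_simps)
    next
      case 2
      then show ?thesis using bracket_ratio_ne_0[OF wn m(1) n] q by simp
    next
      case 3
      have "eta m / q / eta n = 1 / (eta n / eta m * q)" by simp
      then have "bracket (eta m / q / eta n) = - bracket (eta n / eta m * q)" by (simp only: bracket_inverse)
      then show ?thesis using 3 bracket_shift_ne_0[of q eta N n m] wa m n by simp
    qed
  qed
  then show ?thesis unfolding d_eigenvalue_def by simp
qed

lemma d_eigenvalue_pairing:
  assumes "q \<noteq> 0" "\<forall>n<N. eta n \<noteq> 0" "l \<noteq> 0"
  shows "d_eigenvalue q eta N (\<lambda>n. h ! n) l * pairing N (left_sov q eta N h) (right_sov q eta N h')
       = d_eigenvalue q eta N (\<lambda>n. h' ! n) l * pairing N (left_sov q eta N h) (right_sov q eta N h')"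
proof -
  let ?D = "opD q eta N l" and ?L = "left_sov q eta N h" and ?R = "right_sov q eta N h'"
  have "d_eigenvalue q eta N (\<lambda>n. h ! n) l * pairing N ?L ?R = pairing N (covec_op N ?L ?D) ?R"
    using opD_left_sov[OF assms] by (simp add: pairing_def sum_distrib_left mult.assoc)
  also have "\<dots> = pairing N ?L (op_vec N ?D ?R)"
    by (rule pairing_covec_op)
  also have "\<dots> = d_eigenvalue q eta N (\<lambda>n. h' ! n) l * pairing N ?L ?R"
    using opD_right_sov[OF assms] by (simp add: pairing_def sum_distrib_left ac_simps)
  finally show ?thesis .
qed

lemma left_right_sov_orthogonal:
  assumes q: "q \<noteq> 0" "q - 1/q \<noteq> 0" and e: "\<forall>n<N. eta n \<noteq> 0" and wn: "norm_sov eta N \<noteq> 0"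
    and wa: "\<forall>n<N. a_fun q eta N (eta n) \<noteq> 0"
    and h: "length h = N" "length h' = N" "h \<noteq> h'"
  shows "pairing N (left_sov q eta N h) (right_sov q eta N h') = 0"
proof -
  obtain m where m: "m < N" "h ! m \<noteq> h' ! m"
    using h nth_equalityI[of h h'] by auto
  have em: "eta m \<noteq> 0" using e m by auto
  have "d_eigenvalue q eta N (\<lambda>n. h ! n) (eta m / q) \<noteq> d_eigenvalue q eta N (\<lambda>n. h' ! n) (eta m / q)"
    using m em d_eigenvalue_shift_eq_0[of m N eta q] d_eigenvalue_shift_ne_0[OF q wn wa m(1) em] q
    by (cases "h ! m") auto
  then show ?thesis
    using d_eigenvalue_pairing[OF q(1) e, of "eta m / q" h h'] em q by auto
qed


section \<open>Normalisation\<close>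

lemma right_sov_from_cong:
  "(\<And>j. k \<le> j \<Longrightarrow> j < N \<Longrightarrow> h ! j = h' ! j) \<Longrightarrow> right_sov_from q eta N h k = right_sov_from q eta N h' k"
  unfolding right_sov_from_def by (intro foldr_cong) auto

lemma left_sov_upto_cong:
  "(\<And>j. j < k \<Longrightarrow> h ! j = h' ! j) \<Longrightarrow> left_sov_upto q eta N h k = left_sov_upto q eta N h' k"
  unfolding left_sov_upto_def by (intro fold_cong) auto

lemma right_sov_from_skip:
  assumes "k \<le> k'" "k' \<le> N" "\<And>j. k \<le> j \<Longrightarrow> j < k' \<Longrightarrow> \<not> h ! j"
  shows "right_sov_from q eta N h k = right_sov_from q eta N h k'"
  using assms(1,3)
proof (induction k rule: inc_induct)
  case (step n)
  then show ?case using right_sov_from_step[of n N q eta h] assms(2) by auto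
qed simp

lemma left_sov_upto_skip: "(\<And>j. j < k \<Longrightarrow> \<not> h ! j) \<Longrightarrow> left_sov_upto q eta N h k = left_sov_upto q eta N h 0"
  by (induction k) (auto simp: left_sov_upto_Suc)

lemma opB_right_sov_upd:
  assumes "length h = N" "m < N" "h ! m" "\<And>j. j < m \<Longrightarrow> \<not> h ! j" "a_fun q eta N (eta m) \<noteq> 0"
  shows "op_vec N (opB q eta N (eta m)) (right_sov q eta N (h[m := False])) x
       = a_fun q eta N (eta m) * right_sov q eta N h x"
proof -
  have "right_sov q eta N (h[m := False]) = right_sov_from q eta N (h[m := False]) (Suc m)"
    unfolding right_sov_eq by (rule right_sov_from_skip) (use assms in \<open>auto simp: nth_list_update\<close>)
  also have "\<dots> = right_sov_from q eta N h (Suc m)"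
    by (rule right_sov_from_cong) (use assms in auto)
  finally have "op_vec N (opB q eta N (eta m)) (right_sov q eta N (h[m := False])) x
      = a_fun q eta N (eta m) * right_sov_from q eta N h m x"
    using right_sov_from_step[OF assms(2), of q eta h] assms(3,5) by simp
  also have "right_sov_from q eta N h m = right_sov q eta N h"
    unfolding right_sov_eq by (rule right_sov_from_skip[symmetric]) (use assms in auto)
  finally show ?thesis .
qed

text \<open>Since the \<open>C(\<eta>\<^sub>n)\<close> commute, the operator at any site can be moved to the end
  of a left SOV state.\<close>

lemma left_sov_upd_opC:
  assumes q: "q \<noteq> 0" and e: "\<forall>n<N. eta n \<noteq> 0" and wa: "\<forall>n<N. a_fun q eta N (eta n) \<noteq> 0"
    and h: "length h = N" "m < N" "h ! m" and y: "y \<in> confs N"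
  shows "left_sov q eta N h y
       = covec_op N (left_sov q eta N (h[m := False])) (opC q eta N (eta m)) y / d_fun eta N (eta m / q)"
proof -
  let ?hm = "h[m := False]" and ?C = "\<lambda>n. opC q eta N (eta n)" and ?d = "\<lambda>n. d_fun eta N (eta n / q)"
  have "left_sov_upto q eta N h k y = covec_op N (left_sov_upto q eta N ?hm k) (?C m) y / ?d m"
    if "Suc m \<le> k" "k \<le> N" "y \<in> confs N" for k y
    using that
  proof (induction k arbitrary: y rule: dec_induct)
    case base
    have "left_sov_upto q eta N h m = left_sov_upto q eta N ?hm m"
      by (rule left_sov_upto_cong) (use h in auto)
    then show ?case using h by (simp add: left_sov_upto_Suc)
  next
    case (step n)
    have n: "n < N" "n \<noteq> m" using step.hyps step.prems by auto
    show ?case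
    proof (cases "h ! n")
      case False
      then show ?thesis using step n by (simp add: left_sov_upto_Suc)
    next
      case True
      have comm: "op_mult N (?C m) (?C n) x y = op_mult N (?C n) (?C m) x y" if "x \<in> confs N" "y \<in> confs N" for x y
        using exchange_CC[OF rtt_relation_holds _ that] bracket_shift_ne_0[of q eta N n m] q e wa n h by auto
      have "left_sov_upto q eta N h (Suc n) y
          = covec_op N (\<lambda>z. covec_op N (left_sov_upto q eta N ?hm n) (?C m) z / ?d m) (?C n) y / ?d n"
        using True step by (simp add: left_sov_upto_Suc cong: covec_op_cong)
      also have "\<dots> = covec_op N (left_sov_upto q eta N ?hm n) (op_mult N (?C n) (?C m)) y / ?d m / ?d n"
        using comm step.prems(2) by (simp add: covec_op_divide covec_op_mult[symmetric] cong: covec_op_cong)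
      also have "\<dots> = covec_op N (left_sov_upto q eta N ?hm (Suc n)) (?C m) y / ?d m"
        using True n by (simp add: left_sov_upto_Suc covec_op_mult covec_op_divide)
      finally show ?thesis .
    qed
  qed
  then show ?thesis using h y by (simp add: left_sov_eq)
qed

lemma left_sov_opB_shift:
  assumes q: "q \<noteq> 0" "q - 1/q \<noteq> 0" and e: "\<forall>n<N. eta n \<noteq> 0" and wa: "\<forall>n<N. a_fun q eta N (eta n) \<noteq> 0"
    and h: "length h = N" "m < N" "h ! m" and wd: "d_fun eta N (eta m / q) \<noteq> 0" and y: "y \<in> confs N"
  shows "covec_op N (left_sov q eta N h) (opB q eta N (eta m / q)) y
       = a_fun q eta N (eta m) * left_sov q eta N (h[m := False]) y"
proof -
  let ?Lm = "left_sov q eta N (h[m := False])" and ?qdet = "a_fun q eta N (eta m) * d_fun eta N (eta m / q)"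
  have em: "eta m \<noteq> 0" using e h by auto
  have qdet: "op_mult N (opC q eta N (eta m)) (opB q eta N (eta m / q)) x y
      = op_mult N (opD q eta N (eta m)) (opA q eta N (eta m / q)) x y + (if x = y then ?qdet else 0)" if "x \<in> confs N" for x
    using qdet_relation_holds[OF q em e] that y unfolding qdet_relation_def by simp
  have Lm_D: "covec_op N ?Lm (opD q eta N (eta m)) x = 0" if "x \<in> confs N" for x
    using opD_left_sov[OF q(1) e em that] d_eigenvalue_eq_0[of m N eta "\<lambda>n. h[m := False] ! n" q] h em by simp
  have "covec_op N (left_sov q eta N h) (opB q eta N (eta m / q)) y
      = covec_op N ?Lm (op_mult N (opC q eta N (eta m)) (opB q eta N (eta m / q))) y / d_fun eta N (eta m / q)"
    using left_sov_upd_opC[OF q(1) e wa h] by (simp add: covec_op_mult covec_op_divide cong: covec_op_cong)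
  also have "covec_op N ?Lm (op_mult N (opC q eta N (eta m)) (opB q eta N (eta m / q))) y
      = (\<Sum>x\<in>confs N. ?Lm x * op_mult N (opD q eta N (eta m)) (opA q eta N (eta m / q)) x y
          + (if x = y then ?qdet * ?Lm x else 0))"
    unfolding covec_op_def using qdet by (intro sum.cong) (auto simp: algebra_simps)
  also have "\<dots> = covec_op N ?Lm (op_mult N (opD q eta N (eta m)) (opA q eta N (eta m / q))) y + ?qdet * ?Lm y"
    using y by (simp add: covec_op_def sum.distrib sum.delta)
  also have "covec_op N ?Lm (op_mult N (opD q eta N (eta m)) (opA q eta N (eta m / q))) y = 0"
    unfolding covec_op_mult by (subst covec_op_cong[where v' = "\<lambda>x. 0"]) (simp_all add: Lm_D covec_op_def[of N "\<lambda>x. 0"])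
  finally show ?thesis using wd by simp
qed

lemma pairing_linear_relation:
  assumes "\<And>x y. x \<in> confs N \<Longrightarrow> y \<in> confs N \<Longrightarrow> a * M1 x y + b * M2 x y = c * M3 x y"
  shows "a * pairing N (covec_op N L M1) R + b * pairing N (covec_op N L M2) R = c * pairing N (covec_op N L M3) R"
proof -
  have "a * pairing N (covec_op N L M1) R + b * pairing N (covec_op N L M2) R
      = (\<Sum>x\<in>confs N. L x * (a * op_vec N M1 R x + b * op_vec N M2 R x))"
    unfolding pairing_covec_op by (simp add: pairing_def sum_distrib_left sum.distrib algebra_simps)
  also have "\<dots> = (\<Sum>x\<in>confs N. L x * (c * op_vec N M3 R x))"
    using op_vec_linear_relation assms by (intro sum.cong) auto
  finally show ?thesis
    unfolding pairing_covec_op by (simp add: pairing_def sum_distrib_left algebra_simps)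
qed

lemma pairing_op_mult_left_eigen:
  assumes "\<And>y. y \<in> confs N \<Longrightarrow> covec_op N L D y = c * L y"
  shows "pairing N (covec_op N L (op_mult N D M)) R = c * pairing N (covec_op N L M) R"
proof -
  have "pairing N (covec_op N L (op_mult N D M)) R = pairing N (covec_op N (\<lambda>y. c * L y) M) R"
    unfolding covec_op_mult using assms by (intro pairing_cong covec_op_cong) auto
  then show ?thesis by (simp add: covec_op_scale pairing_scale_left)
qed

lemma pairing_op_mult_right_eigen:
  assumes "\<And>x. x \<in> confs N \<Longrightarrow> op_vec N D R x = c * R x"
  shows "pairing N (covec_op N L (op_mult N M D)) R = c * pairing N (covec_op N L M) R"
proof -
  have "pairing N (covec_op N L (op_mult N M D)) R = pairing N (covec_op N L M) (op_vec N D R)"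
    by (simp add: pairing_covec_op op_vec_mult cong: pairing_cong)
  also have "\<dots> = pairing N (covec_op N L M) (\<lambda>x. c * R x)"
    using assms by (intro pairing_cong) auto
  finally show ?thesis by (simp add: pairing_scale_right)
qed

text \<open>Sandwich the exchange relation of \<open>D(\<eta>\<^sub>m)\<close> and \<open>B(\<eta>\<^sub>m / q)\<close> between \<open>\<langle>h|\<close> and
  \<open>|h[m := 0]\<rangle>\<close>: \<open>B(\<eta>\<^sub>m) |h[m := 0]\<rangle>\<close> is a multiple of \<open>|h\<rangle>\<close>, and \<open>\<langle>h| B(\<eta>\<^sub>m / q)\<close> a multiple of
  \<open>\<langle>h[m := 0]|\<close> by the quantum determinant.\<close>

lemma pairing_sov_upd:
  assumes q: "q \<noteq> 0" "q - 1/q \<noteq> 0" and e: "\<forall>n<N. eta n \<noteq> 0"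
    and wa: "\<forall>n<N. a_fun q eta N (eta n) \<noteq> 0" and wd: "\<forall>n<N. d_fun eta N (eta n / q) \<noteq> 0"
    and h: "length h = N" "m < N" "h ! m" "\<And>j. j < m \<Longrightarrow> \<not> h ! j"
  shows "d_eigenvalue q eta N (\<lambda>n. h[m := False] ! n) (eta m / q) * pairing N (left_sov q eta N h) (right_sov q eta N h)
       = - d_eigenvalue q eta N (\<lambda>n. h ! n) (eta m)
           * pairing N (left_sov q eta N (h[m := False])) (right_sov q eta N (h[m := False]))"
proof -
  let ?hm = "h[m := False]"
  let ?L = "left_sov q eta N h" and ?R = "right_sov q eta N h"
  let ?Lm = "left_sov q eta N ?hm" and ?Rm = "right_sov q eta N ?hm"
  let ?B = "opB q eta N" and ?D = "opD q eta N" and ?a = "a_fun q eta N (eta m)"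
  let ?e = "d_eigenvalue q eta N (\<lambda>n. h ! n)" and ?em = "d_eigenvalue q eta N (\<lambda>n. ?hm ! n)"
  have em: "eta m \<noteq> 0" and emq: "eta m / q \<noteq> 0" and a: "?a \<noteq> 0" using e wa h q by auto
  have X: "pairing N (covec_op N ?L (?B (eta m))) ?Rm = ?a * pairing N ?L ?R"
    unfolding pairing_covec_op using opB_right_sov_upd[OF h a] by (simp add: pairing_def sum_distrib_left ac_simps)
  have Y: "pairing N (covec_op N ?L (?B (eta m / q))) ?Rm = ?a * pairing N ?Lm ?Rm"
    using left_sov_opB_shift[OF q e wa h(1-3)] wd h
    by (simp add: pairing_scale_left cong: pairing_cong)
  have "rtt_relation q eta N (eta m) (eta m / q)"
    using rtt_relation_holds q em emq e by blast
  then have "bracket q * pairing N (covec_op N ?L (op_mult N (?D (eta m)) (?B (eta m / q)))) ?Rm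
      + (q - 1/q) * pairing N (covec_op N ?L (op_mult N (?B (eta m)) (?D (eta m / q)))) ?Rm
      = bracket (q * q) * pairing N (covec_op N ?L (op_mult N (?B (eta m / q)) (?D (eta m)))) ?Rm"
    using exchange_DB em q by (intro pairing_linear_relation) force
  moreover have "pairing N (covec_op N ?L (op_mult N (?D (eta m)) (?B (eta m / q)))) ?Rm
      = ?e (eta m) * pairing N (covec_op N ?L (?B (eta m / q))) ?Rm"
    by (rule pairing_op_mult_left_eigen) (rule opD_left_sov[OF q(1) e em])
  moreover have "pairing N (covec_op N ?L (op_mult N (?B (eta m)) (?D (eta m / q)))) ?Rm
      = ?em (eta m / q) * pairing N (covec_op N ?L (?B (eta m))) ?Rm"
    by (rule pairing_op_mult_right_eigen) (rule opD_right_sov[OF q(1) e emq])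
  moreover have "pairing N (covec_op N ?L (op_mult N (?B (eta m / q)) (?D (eta m)))) ?Rm
      = ?em (eta m) * pairing N (covec_op N ?L (?B (eta m / q))) ?Rm"
    by (rule pairing_op_mult_right_eigen) (rule opD_right_sov[OF q(1) e em])
  moreover have "?em (eta m) = 0"
    using d_eigenvalue_eq_0[of m N eta "\<lambda>n. ?hm ! n" q] em h by simp
  ultimately have "(q - 1/q) * ?a * (?e (eta m) * pairing N ?Lm ?Rm + ?em (eta m / q) * pairing N ?L ?R) = 0"
    using X Y by (simp add: bracket_def algebra_simps)
  then show ?thesis using q a by (simp add: eq_neg_iff_add_eq_0 add.commute)
qed

lemma prod_lessThan_split_at:
  fixes f :: "nat \<Rightarrow> 'a::comm_monoid_mult"
  assumes "m < N"
  shows "(\<Prod>n<N. f n) = (\<Prod>n<m. f n) * f m * (\<Prod>n\<in>{m<..<N}. f n)"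
proof -
  have "{..<N} = {..<m} \<union> ({m} \<union> {m<..<N})" using assms by auto
  moreover have "{..<m} \<inter> ({m} \<union> {m<..<N}) = {}" "{m} \<inter> {m<..<N} = {}" by auto
  ultimately show ?thesis by (simp add: prod.union_disjoint ac_simps)
qed

lemma prod_pairs_split_at:
  fixes f :: "nat \<Rightarrow> nat \<Rightarrow> 'a::comm_monoid_mult"
  assumes "m < N"
  shows "(\<Prod>b<N. \<Prod>a\<in>{b<..<N}. f b a)
       = (\<Prod>b<N. \<Prod>a\<in>{b<..<N}. if b = m \<or> a = m then 1 else f b a) * (\<Prod>b<m. f b m) * (\<Prod>a\<in>{m<..<N}. f m a)"
proof -
  have "f b a = (if b = m \<or> a = m then 1 else f b a) * (if a = m then f b a else 1) * (if b = m then f b a else 1)"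
    if "b < a" for b a
    using that by auto
  then have "(\<Prod>b<N. \<Prod>a\<in>{b<..<N}. f b a) = (\<Prod>b<N. \<Prod>a\<in>{b<..<N}.
      (if b = m \<or> a = m then 1 else f b a) * (if a = m then f b a else 1) * (if b = m then f b a else 1))"
    by (intro prod.cong refl) auto
  also have "\<dots> = (\<Prod>b<N. \<Prod>a\<in>{b<..<N}. if b = m \<or> a = m then 1 else f b a)
      * (\<Prod>b<N. \<Prod>a\<in>{b<..<N}. if a = m then f b a else 1) * (\<Prod>b<N. \<Prod>a\<in>{b<..<N}. if b = m then f b a else 1)"
    by (simp only: prod.distrib)
  also have "(\<Prod>b<N. \<Prod>a\<in>{b<..<N}. if a = m then f b a else 1) = (\<Prod>b<m. f b m)"
  proof -
    have "{b. b < N \<and> b < m \<and> m < N} = {..<m}" using assms by auto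
    then show ?thesis by (simp add: prod.delta' prod.If_cases Int_def)
  qed
  also have "(\<Prod>b<N. \<Prod>a\<in>{b<..<N}. if b = m then f b a else 1)
      = (\<Prod>b<N. if b = m then \<Prod>a\<in>{m<..<N}. f m a else 1)"
    by (intro prod.cong) auto
  also have "\<dots> = (\<Prod>a\<in>{m<..<N}. f m a)"
    using assms by (simp add: prod.delta)
  finally show ?thesis .
qed

definition sov_norm_denom :: "complex \<Rightarrow> (nat \<Rightarrow> complex) \<Rightarrow> nat \<Rightarrow> bool list \<Rightarrow> complex" where
  "sov_norm_denom q eta N h =
    (\<Prod>b<N. \<Prod>a\<in>{b<..<N}. bracket (eta a * q powi (of_bool (h ! b) - of_bool (h ! a)) / eta b))"

lemma powi_of_bool_diff:
  "(q::complex) \<noteq> 0 \<Longrightarrow> q powi (of_bool x - of_bool y) = (if x = y then 1 else if x then q else 1 / q)"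
  by (cases x; cases y) (simp_all add: power_int_minus divide_inverse)

lemma sov_norm_denom_upd:
  assumes q: "q \<noteq> 0" and e: "\<forall>n<N. eta n \<noteq> 0" and h: "length h = N" "m < N" "h ! m"
  shows "sov_norm_denom q eta N h * - d_eigenvalue q eta N (\<lambda>n. h ! n) (eta m)
       = sov_norm_denom q eta N (h[m := False]) * d_eigenvalue q eta N (\<lambda>n. h[m := False] ! n) (eta m / q)"
proof -
  let ?hm = "h[m := False]"
  define g where "g h' b a = bracket (eta a * q powi (of_bool (h' ! b) - of_bool (h' ! a)) / eta b)" for h' b a
  define E where "E h' l n = bracket (l / eta n * (if h' ! n then q else 1))" for h' l n
  have em: "eta m \<noteq> 0" using e h by auto
  have rest: "(\<Prod>b<N. \<Prod>a\<in>{b<..<N}. if b = m \<or> a = m then 1 else g h b a)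
      = (\<Prod>b<N. \<Prod>a\<in>{b<..<N}. if b = m \<or> a = m then 1 else g ?hm b a)"
    by (intro prod.cong) (auto simp: g_def)
  have left: "g h b m * E h (eta m) b = g ?hm b m * E ?hm (eta m / q) b" if "b < m" for b
  proof -
    have "eta b \<noteq> 0" using that h e by auto
    with that h q em show ?thesis
      by (cases "h ! b") (simp_all add: g_def E_def powi_of_bool_diff; simp add: bracket_def field_simps)+
  qed
  have right: "g h m a * E h (eta m) a = g ?hm m a * E ?hm (eta m / q) a" if "a \<in> {m<..<N}" for a
  proof -
    have "eta a \<noteq> 0" using that e by auto
    with that h q em show ?thesis
      by (cases "h ! a") (simp_all add: g_def E_def powi_of_bool_diff; simp add: bracket_def field_simps)+
  qed
  have centre: "- E h (eta m) m = E ?hm (eta m / q) m"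
    using h q em by (simp add: E_def bracket_def field_simps)
  have split: "sov_norm_denom q eta N h' * d_eigenvalue q eta N (\<lambda>n. h' ! n) l
      = (\<Prod>b<N. \<Prod>a\<in>{b<..<N}. if b = m \<or> a = m then 1 else g h' b a)
        * (\<Prod>b<m. g h' b m * E h' l b) * (\<Prod>a\<in>{m<..<N}. g h' m a * E h' l a) * E h' l m" for h' l
    unfolding sov_norm_denom_def d_eigenvalue_def g_def[symmetric] E_def[symmetric]
      prod_pairs_split_at[OF h(2), of "g h'"] prod_lessThan_split_at[OF h(2), of "E h' l"] prod.distrib
    by (simp only: ac_simps)
  have "(\<Prod>b<m. g h b m * E h (eta m) b) = (\<Prod>b<m. g ?hm b m * E ?hm (eta m / q) b)"
    using left by (intro prod.cong) auto
  moreover have "(\<Prod>a\<in>{m<..<N}. g h m a * E h (eta m) a) = (\<Prod>a\<in>{m<..<N}. g ?hm m a * E ?hm (eta m / q) a)"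
    using right by (intro prod.cong) auto
  ultimately show ?thesis
    unfolding mult_minus_right split by (simp only: rest centre[symmetric] mult_minus_right)
qed

lemma sov_norm_denom_ref_state:
  assumes "\<And>j. j < N \<Longrightarrow> \<not> h ! j"
  shows "sov_norm_denom q eta N h = norm_sov eta N * norm_sov eta N"
proof -
  have "norm_sov eta N * norm_sov eta N = (\<Prod>b<N. \<Prod>a\<in>{b<..<N}. (csqrt (eta a / eta b - eta b / eta a))\<^sup>2)"
    unfolding norm_sov_def power2_eq_square[symmetric] prod_power_distrib ..
  also have "\<dots> = sov_norm_denom q eta N h"
    unfolding sov_norm_denom_def bracket_def using assms by (intro prod.cong refl) auto
  finally show ?thesis by simp
qed

lemma pairing_sov_diag_ref_state:
  assumes wn: "norm_sov eta N \<noteq> 0" and F: "\<And>j. j < N \<Longrightarrow> \<not> h ! j"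
  shows "pairing N (left_sov q eta N h) (right_sov q eta N h) * sov_norm_denom q eta N h = 1"
proof -
  have "left_sov q eta N h = (\<lambda>x. ref_state N x / norm_sov eta N)"
    using left_sov_upto_skip[of N h] F by (simp add: left_sov_eq left_sov_upto_0)
  moreover have "right_sov q eta N h = (\<lambda>x. ref_state N x / norm_sov eta N)"
    using right_sov_from_skip[of 0 N N h] F by (simp add: right_sov_eq right_sov_from_N)
  moreover have "pairing N (\<lambda>x. ref_state N x / norm_sov eta N) (\<lambda>x. ref_state N x / norm_sov eta N)
      = (\<Sum>x\<in>confs N. if x = replicate N True then 1 / (norm_sov eta N * norm_sov eta N) else 0)"
    unfolding pairing_def ref_state_def by (intro sum.cong) auto
  ultimately show ?thesis using sov_norm_denom_ref_state[OF F] wn by (simp add: sum.delta)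
qed

lemma d_eigenvalue_at_eta_ne_0:
  assumes q: "q \<noteq> 0" "q - 1/q \<noteq> 0" and wn: "norm_sov eta N \<noteq> 0"
    and wa: "\<forall>n<N. a_fun q eta N (eta n) \<noteq> 0" and m: "m < N" "eta m \<noteq> 0" "P m"
  shows "d_eigenvalue q eta N P (eta m) \<noteq> 0"
proof -
  have "bracket (eta m / eta n * (if P n then q else 1)) \<noteq> 0" if n: "n < N" for n
  proof (cases "n = m")
    case True
    then show ?thesis using m q by (simp add: bracket_def)
  next
    case False
    then show ?thesis
      using bracket_shift_ne_0[of q eta N m n] bracket_ratio_ne_0[OF wn m(1) n] wa m n by auto
  qed
  then show ?thesis unfolding d_eigenvalue_def by simp
qed

lemma pairing_sov_diag:
  assumes q: "q \<noteq> 0" "q - 1/q \<noteq> 0" and e: "\<forall>n<N. eta n \<noteq> 0" and wn: "norm_sov eta N \<noteq> 0"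
    and wa: "\<forall>n<N. a_fun q eta N (eta n) \<noteq> 0" and wd: "\<forall>n<N. d_fun eta N (eta n / q) \<noteq> 0"
    and h: "length h = N"
  shows "pairing N (left_sov q eta N h) (right_sov q eta N h) * sov_norm_denom q eta N h = 1"
  using h
proof (induction "card {j. j < N \<and> h ! j}" arbitrary: h)
  case 0
  then show ?case using pairing_sov_diag_ref_state[OF wn] by auto
next
  case (Suc c)
  define m where "m = (LEAST j. j < N \<and> h ! j)"
  have "{j. j < N \<and> h ! j} \<noteq> {}" using Suc.hyps(2) by force
  then have m: "m < N" "h ! m" unfolding m_def by (metis (mono_tags, lifting) LeastI empty_Collect_eq)+
  have first: "\<not> h ! j" if "j < m" for j
    using not_less_Least[OF that[unfolded m_def]] m that by auto
  let ?hm = "h[m := False]"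
  have "{j. j < N \<and> ?hm ! j} = {j. j < N \<and> h ! j} - {m}"
    using Suc.prems m by (auto simp: nth_list_update)
  then have "c = card {j. j < N \<and> ?hm ! j}" using Suc.hyps(2) m by simp
  then have IH: "pairing N (left_sov q eta N ?hm) (right_sov q eta N ?hm) * sov_norm_denom q eta N ?hm = 1"
    using Suc.hyps(1) Suc.prems by simp
  have em: "eta m \<noteq> 0" using e m by auto
  have ne: "d_eigenvalue q eta N (\<lambda>n. h ! n) (eta m) \<noteq> 0"
    using d_eigenvalue_at_eta_ne_0[OF q wn wa m(1) em, of "\<lambda>n. h ! n"] m by simp
  let ?P = "pairing N (left_sov q eta N h) (right_sov q eta N h)"
  let ?Pm = "pairing N (left_sov q eta N ?hm) (right_sov q eta N ?hm)"
  let ?e = "d_eigenvalue q eta N (\<lambda>n. h ! n) (eta m)"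
  let ?em = "d_eigenvalue q eta N (\<lambda>n. ?hm ! n) (eta m / q)"
  have "sov_norm_denom q eta N h * ?e = - (sov_norm_denom q eta N ?hm * ?em)"
    using sov_norm_denom_upd[OF q(1) e Suc.prems m] by (metis minus_minus mult_minus_right)
  then have "?P * (sov_norm_denom q eta N h * ?e) = ?P * - (sov_norm_denom q eta N ?hm * ?em)"
    by (rule arg_cong)
  then have "?P * sov_norm_denom q eta N h * ?e = - (sov_norm_denom q eta N ?hm * (?em * ?P))"
    by (simp add: ac_simps)
  also have "\<dots> = ?e * (?Pm * sov_norm_denom q eta N ?hm)"
    using pairing_sov_upd[OF q e wa wd Suc.prems m first] by (simp add: ac_simps)
  finally show ?case using IH ne by simp
qed


theorem mainTheorem4:
  fixes q :: complex and eta :: "nat \<Rightarrow> complex" and N :: nat and h h' :: "bool list"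
  assumes q_nz: "q \<noteq> 0" and q_not1: "q \<noteq> 1" and q_notm1: "q \<noteq> -1"
    and N_pos: "N \<ge> 1"
    and eta_nz: "\<forall>n<N. eta n \<noteq> 0"
    and eta_gen: "\<forall>a b j. a < b \<and> b < N \<and> j \<in> {-1, 0, 1::int} \<longrightarrow> eta a \<noteq> q powi j * eta b"
    and wd_norm: "norm_sov eta N \<noteq> 0"
    and wd_a: "\<forall>n<N. a_fun q eta N (eta n) \<noteq> 0"
    and wd_d: "\<forall>n<N. d_fun eta N (eta n / q) \<noteq> 0"
    and len_h: "length h = N" and len_h': "length h' = N"
  shows "pairing N (left_sov q eta N h) (right_sov q eta N h') =
    (if h = h' then
       (\<Prod>b<N. \<Prod>a\<in>{b<..<N}.
          1 / (eta a * q powi (of_bool (h ! b) - of_bool (h ! a)) / eta b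
               - eta b / (q powi (of_bool (h ! b) - of_bool (h ! a)) * eta a)))
     else 0)"
proof -
  \<comment> \<open>The genericity of the inhomogeneities is used only through \<open>wd_norm\<close> and \<open>wd_a\<close>,
    which already exclude \<open>\<eta>\<^sub>a = q\<^sup>j \<eta>\<^sub>b\<close>.\<close>
  have q: "q - 1/q \<noteq> 0"
  proof
    assume "q - 1/q = 0"
    then have "(q - 1) * (q + 1) = 0" using q_nz by (simp add: field_simps algebra_simps)
    then show False using q_not1 q_notm1 by (auto simp: add_eq_0_iff2)
  qed
  show ?thesis
  proof (cases "h = h'")
    case False
    then show ?thesis using left_right_sov_orthogonal[OF q_nz q eta_nz wd_norm wd_a len_h len_h'] by simp
  next
    case True
    have "(\<Prod>b<N. \<Prod>a\<in>{b<..<N}.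
          1 / (eta a * q powi (of_bool (h ! b) - of_bool (h ! a)) / eta b
               - eta b / (q powi (of_bool (h ! b) - of_bool (h ! a)) * eta a)))
        = 1 / sov_norm_denom q eta N h"
      unfolding sov_norm_denom_def bracket_def by (simp add: prod_dividef ac_simps)
    moreover have "pairing N (left_sov q eta N h) (right_sov q eta N h) = 1 / sov_norm_denom q eta N h"
      using pairing_sov_diag[OF q_nz q eta_nz wd_norm wd_a wd_d len_h] by (simp add: eq_divide_eq) auto
    ultimately show ?thesis using True by simp
  qed
qed

end
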